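(* Let $N\ge3$, $\alpha,\beta>-1$, $\mu\in(1,2)$, let $\{x_j,\omega_j\}_{j=0}^N$ be the JGL nodes and weights, and let $\hat h_j\in\mathcal P_{N-1}$ ($0\le j\le N-1$) be the Lagrange basis polynomials at $x_0,\dots,x_{N-1}$, i.e. $\hat h_j(x_i)=\delta_{ij}$ for $0\le i,j\le N-1$. Then for $0\le j\le N-1$, $$ \hat h_j(x)=\sum_{n=0}^{N-1}\varrho_{nj}P_n^{(\alpha,\beta)}(x)=\sum_{l=0}^{N-1}\tilde\varrho_{lj}P_l^{(\mu,1-\mu)}(x)=\hat\varrho_{0j}+\sum_{l=0}^{N-2}\hat\varrho_{l+1,j}(1+x)P_l^{(\mu,1-\mu)}(x), $$ where $\hat\varrho_{00}=1$, $\hat\varrho_{0j}=0$ for $1\le j\le N-1$, and $$ \varrho_{n0}=\frac{1}{\gamma_n^{(\alpha,\beta)}}\Big\{P_n^{(\alpha,\beta)}(-1)\omega_0-\frac{\beta+1}{\alpha+1}\frac{P_N^{(\alpha,\beta)}(1)}{P_N^{(\alpha,\beta)}(-1)}P_n^{(\alpha,\beta)}(1)\omega_N\Big\}, $$ $$ \varrho_{nj}=\frac{1}{\gamma_n^{(\alpha,\beta)}}\Big\{P_n^{(\alpha,\beta)}(x_j)\omega_j-\frac{1}{\alpha+1}\frac{P_N^{(\alpha,\beta)}(1)}{P_N^{(\alpha,\beta)}(x_j)}P_n^{(\alpha,\beta)}(1)\omega_N\Big\},\quad 1\le j\le N-1, $$ $$ \tilde\varrho_{lj}=\sum_{n=l}^{N-1}{}^{(\alpha,\beta)}C^{(\mu,1-\mu)}_{ln}\,\varrho_{nj},\quad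 0\le l,j\le N-1, $$ and the $\hat\varrho_{ij}$, $1\le i\le N-1$, are given by the backward recurrence $$ \hat\varrho_{N-1,j}=\frac{\tilde\varrho_{N-1,j}}{a_{N-1}},\quad \hat\varrho_{N-2,j}=\frac{\tilde\varrho_{N-2,j}}{a_{N-2}}-\frac{b_{N-2}+1}{a_{N-2}}\hat\varrho_{N-1,j},\quad \hat\varrho_{ij}=\frac{\tilde\varrho_{ij}}{a_i}-\frac{b_i+1}{a_i}\hat\varrho_{i+1,j}-\frac{c_i}{a_i}\hat\varrho_{i+2,j}\ \ (i=N-3,\dots,1), $$ with $a_i=\frac{i+1}{2i+1}$ ($i\ge1$), $b_i=\frac{1-2\mu}{(2i+1)(2i+3)}$ and $c_i=\frac{(i+1+\mu)(i+2-\mu)}{(i+2)(2i+3)}$ ($i\ge0$).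
   Context: Jacobi polynomials are in Szegő's normalization: $P_n^{(\alpha,\beta)}(x)=\frac{\Gamma(n+\alpha+1)}{n!\Gamma(\alpha+1)}\,{}_2F_1\big(-n,n+\alpha+\beta+1;\alpha+1;\tfrac{1-x}{2}\big)$, $P_0^{(\alpha,\beta)}=1$. With these coefficients the three-term recurrence $xP_l^{(\mu,1-\mu)}=a_{l+1}P_{l+1}^{(\mu,1-\mu)}+b_lP_l^{(\mu,1-\mu)}+c_{l-1}P_{l-1}^{(\mu,1-\mu)}$ holds for $l\ge0$ with $c_{-1}=0$. For $\alpha,\beta>-1$, $\gamma_n^{(\alpha,\beta)}=\frac{2^{\alpha+\beta+1}\Gamma(n+\alpha+1)\Gamma(n+\beta+1)}{(2n+\alpha+\beta+1)\,n!\,\Gamma(n+\alpha+\beta+1)}$. Connection coefficients: for $\alpha,\beta,a,b>-1$, ${}^{(\alpha,\beta)}C^{(a,b)}_{ln}$ are the unique numbers with $P_n^{(\alpha,\beta)}=\sum_{l=0}^n {}^{(\alpha,\beta)}C^{(a,b)}_{ln}P_l^{(a,b)}$. JGL nodes $x_0<\dots<x_N$ are the zeros of $(1-x^2)\frac{d}{dx}P_N^{(\alpha,\beta)}$ ($x_0=-1$, $x_N=1$) and the weights $\omega_j$ make $\int_{-1}^1\phi(1-x)^\alpha(1+x)^\beta dx=\sum_j\phi(x_j)\omega_j$ exact for $\phi\in\mathcal P_{2N-1}$. *)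

theory Defs
  imports "HOL-Analysis.Analysis"
begin

text \<open>Jacobi polynomial in Szego's normalization, via the terminating 2F1 series.\<close>
definition jacobiP :: "nat \<Rightarrow> real \<Rightarrow> real \<Rightarrow> real \<Rightarrow> real" where
  "jacobiP n \<alpha> \<beta> x =
     Gamma (real n + \<alpha> + 1) / (fact n * Gamma (\<alpha> + 1)) *
     (\<Sum>k\<le>n. pochhammer (- real n) k * pochhammer (real n + \<alpha> + \<beta> + 1) k
              / (pochhammer (\<alpha> + 1) k * fact k) * ((1 - x) / 2) ^ k)"

text \<open>Normalization constant gamma_n; the n = 0 case is written in the form
  obtained by (alpha+beta+1) Gamma(alpha+beta+1) = Gamma(alpha+beta+2), which is
  the standard value and also covers alpha+beta+1 = 0.\<close>
definition jacobi_gamma :: "nat \<Rightarrow> real \<Rightarrow> real \<Rightarrow> real" where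
  "jacobi_gamma n \<alpha> \<beta> =
     (if n = 0 then 2 powr (\<alpha> + \<beta> + 1) * Gamma (\<alpha> + 1) * Gamma (\<beta> + 1) / Gamma (\<alpha> + \<beta> + 2)
      else 2 powr (\<alpha> + \<beta> + 1) * Gamma (real n + \<alpha> + 1) * Gamma (real n + \<beta> + 1)
           / ((2 * real n + \<alpha> + \<beta> + 1) * fact n * Gamma (real n + \<alpha> + \<beta> + 1)))"

definition conn_coeff :: "real \<Rightarrow> real \<Rightarrow> real \<Rightarrow> real \<Rightarrow> nat \<Rightarrow> nat \<Rightarrow> real" where
  "conn_coeff \<alpha> \<beta> a b l n =
     (THE c :: nat \<Rightarrow> real. (\<forall>k>n. c k = 0) \<and>
        (\<forall>x. jacobiP n \<alpha> \<beta> x = (\<Sum>k\<le>n. c k * jacobiP k a b x))) l"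

definition JGL_nodes :: "nat \<Rightarrow> real \<Rightarrow> real \<Rightarrow> (nat \<Rightarrow> real) \<Rightarrow> bool" where
  "JGL_nodes N \<alpha> \<beta> xs \<longleftrightarrow>
     (\<forall>i j. i < j \<and> j \<le> N \<longrightarrow> xs i < xs j) \<and>
     xs ` {0..N} = {y. (1 - y\<^sup>2) * deriv (jacobiP N \<alpha> \<beta>) y = 0}"

definition JGL_weights :: "nat \<Rightarrow> real \<Rightarrow> real \<Rightarrow> (nat \<Rightarrow> real) \<Rightarrow> (nat \<Rightarrow> real) \<Rightarrow> bool" where
  "JGL_weights N \<alpha> \<beta> xs w \<longleftrightarrow>
     (\<forall>p :: real poly. degree p \<le> 2 * N - 1 \<longrightarrow>
        ((\<lambda>y. poly p y * (1 - y) powr \<alpha> * (1 + y) powr \<beta>) has_integral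
           (\<Sum>j\<le>N. poly p (xs j) * w j)) {-1..1})"

text \<open>Three-term recurrence coefficients for P^(mu,1-mu).\<close>
definition rec_a :: "nat \<Rightarrow> real" where
  "rec_a i = (real i + 1) / (2 * real i + 1)"
definition rec_b :: "real \<Rightarrow> nat \<Rightarrow> real" where
  "rec_b \<mu> i = (1 - 2 * \<mu>) / ((2 * real i + 1) * (2 * real i + 3))"
definition rec_c :: "real \<Rightarrow> nat \<Rightarrow> real" where
  "rec_c \<mu> i = (real i + 1 + \<mu>) * (real i + 2 - \<mu>) / ((real i + 2) * (2 * real i + 3))"

definition rho :: "real \<Rightarrow> real \<Rightarrow> nat \<Rightarrow> (nat \<Rightarrow> real) \<Rightarrow> (nat \<Rightarrow> real) \<Rightarrow> nat \<Rightarrow> nat \<Rightarrow> real" where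
  "rho \<alpha> \<beta> N xs w n j =
     (if j = 0 then
        1 / jacobi_gamma n \<alpha> \<beta> *
        (jacobiP n \<alpha> \<beta> (-1) * w 0
         - (\<beta> + 1) / (\<alpha> + 1) * (jacobiP N \<alpha> \<beta> 1 / jacobiP N \<alpha> \<beta> (-1)) * jacobiP n \<alpha> \<beta> 1 * w N)
      else
        1 / jacobi_gamma n \<alpha> \<beta> *
        (jacobiP n \<alpha> \<beta> (xs j) * w j
         - 1 / (\<alpha> + 1) * (jacobiP N \<alpha> \<beta> 1 / jacobiP N \<alpha> \<beta> (xs j)) * jacobiP n \<alpha> \<beta> 1 * w N))"

definition rho_tilde :: "real \<Rightarrow> real \<Rightarrow> real \<Rightarrow> nat \<Rightarrow> (nat \<Rightarrow> real) \<Rightarrow> (nat \<Rightarrow> real) \<Rightarrow> nat \<Rightarrow> nat \<Rightarrow> real" where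
  "rho_tilde \<alpha> \<beta> \<mu> N xs w l j =
     (\<Sum>n = l..N - 1. conn_coeff \<alpha> \<beta> \<mu> (1 - \<mu>) l n * rho \<alpha> \<beta> N xs w n j)"

end

theory Submission
  imports Defs
begin

text \<open>
  The Lagrange polynomial \<open>h_j\<close> has degree \<open>N - 1\<close>, so its coefficient on \<open>P_n^(\<alpha>,\<beta>)\<close> is the
  weighted integral of \<open>h_j P_n\<close> divided by \<open>\<gamma>_n\<close>. The JGL rule integrates \<open>h_j P_n\<close> exactly, and since
  \<open>h_j\<close> vanishes at \<open>x_0, ..., x_(N-1)\<close> except at \<open>x_j\<close>, only the nodes \<open>x_j\<close> and \<open>x_N = 1\<close> contribute.
  The value \<open>h_j(1)\<close> is read off from the explicit form of \<open>h_j\<close> in terms of \<open>D = P_N'\<close>, whose roots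
  are the interior nodes, using the Jacobi differential equation at \<open>\<plusminus>1\<close> and at these roots.

  The second expansion is the first one rewritten with the connection coefficients. For the third,
  each \<open>(1 + x) P_l^(\<mu>,1-\<mu>)\<close> is expanded by the three-term recurrence: the backward recurrence says
  precisely that the resulting coefficient of \<open>P_i^(\<mu>,1-\<mu>)\<close> is \<open>\<rho>~_ij\<close> for \<open>i \<ge> 1\<close>, and the
  constant term is fixed by evaluating at \<open>x_0 = -1\<close>.
\<close>


section \<open>The Jacobi weight\<close>

definition jacobi_weight :: "real \<Rightarrow> real \<Rightarrow> real \<Rightarrow> real" where
  "jacobi_weight \<alpha> \<beta> x = (1 - x) powr \<alpha> * (1 + x) powr \<beta>"

lemma jacobi_weight_pos: "x \<in> {-1<..<1} \<Longrightarrow> jacobi_weight \<alpha> \<beta> x > 0"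
  by (auto simp: jacobi_weight_def)

lemma jacobi_weight_nonneg: "jacobi_weight \<alpha> \<beta> x \<ge> 0"
  by (simp add: jacobi_weight_def)

lemma jacobi_weight_plus_one:
  "x \<in> {-1..1} \<Longrightarrow> jacobi_weight (\<alpha> + 1) (\<beta> + 1) x = (1 - x\<^sup>2) * jacobi_weight \<alpha> \<beta> x"
  by (simp add: jacobi_weight_def powr_add power2_eq_square algebra_simps)

lemma power_mult_jacobi_weight:
  assumes "x \<in> {-1..1}"
  shows "(1 + x) ^ k * jacobi_weight \<alpha> \<beta> x = jacobi_weight \<alpha> (\<beta> + real k) x"
proof (cases "x = -1")
  case True
  then show ?thesis by (cases k) (auto simp: jacobi_weight_def)
next
  case False
  with assms have "1 + x > 0" by auto
  then show ?thesis by (simp add: jacobi_weight_def powr_add powr_realpow)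
qed

lemma jacobi_weight_has_integral:
  assumes "\<alpha> > -1" "\<beta> > -1"
  shows "(jacobi_weight \<alpha> \<beta> has_integral 2 powr (\<alpha> + \<beta> + 1) * Beta (\<alpha> + 1) (\<beta> + 1)) {-1..1}"
proof -
  have "((\<lambda>t. t powr \<beta> * (1 - t) powr \<alpha>) has_integral Beta (\<beta> + 1) (\<alpha> + 1)) (cbox 0 1)"
    using has_integral_Beta_real[of "\<beta> + 1" "\<alpha> + 1"] assms by simp
  from has_integral_affinity'[OF this, of "1/2" "1/2"]
  have "((\<lambda>x. ((1 + x) / 2) powr \<beta> * ((1 - x) / 2) powr \<alpha>) has_integral 2 * Beta (\<beta> + 1) (\<alpha> + 1))
          {-1..1}"
    by (simp add: field_simps)
  from has_integral_mult_right[OF this, of "2 powr (\<alpha> + \<beta>)"]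
  have "((\<lambda>x. 2 powr (\<alpha> + \<beta>) * (((1 + x) / 2) powr \<beta> * ((1 - x) / 2) powr \<alpha>))
          has_integral 2 powr (\<alpha> + \<beta> + 1) * Beta (\<alpha> + 1) (\<beta> + 1)) {-1..1}"
    by (simp add: powr_add Beta_commute mult_ac)
  then show ?thesis
    by (rule has_integral_eq[rotated])
       (auto simp: jacobi_weight_def powr_divide powr_add field_simps)
qed

lemma poly_jacobi_weight_integrable:
  assumes "\<alpha> > -1" "\<beta> > -1"
  shows "(\<lambda>x. poly p x * jacobi_weight \<alpha> \<beta> x) integrable_on {-1..1}"
proof -
  define q where "q = p \<circ>\<^sub>p [:-1, 1:]"
  have p_eq: "poly p x = (\<Sum>k\<le>degree q. coeff q k * (1 + x) ^ k)" for x
    by (simp add: q_def poly_pcompose poly_altdef[symmetric])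
  have "(\<lambda>x. \<Sum>k\<le>degree q. coeff q k * ((1 + x) ^ k * jacobi_weight \<alpha> \<beta> x)) integrable_on {-1..1}"
  proof (intro integrable_sum integrable_on_mult_right)
    fix k
    have "jacobi_weight \<alpha> (\<beta> + real k) integrable_on {-1..1}"
      using jacobi_weight_has_integral[of \<alpha> "\<beta> + real k"] assms by (auto simp: has_integral_integrable)
    then show "(\<lambda>x. (1 + x) ^ k * jacobi_weight \<alpha> \<beta> x) integrable_on {-1..1}"
      by (rule integrable_eq) (metis power_mult_jacobi_weight)
  qed simp
  then show ?thesis
    by (rule integrable_eq) (simp add: p_eq sum_distrib_left sum_distrib_right mult_ac)
qed

text \<open>The integrand is the derivative of \<open>(1 - x) powr (\<alpha> + 1) * (1 + x) powr (\<beta> + 1) * F x\<close>,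
  which vanishes at both end points.\<close>
lemma has_integral_jacobi_weight_derivative_0:
  assumes "\<alpha> > -1" "\<beta> > -1"
  shows "((\<lambda>x. poly ([:\<beta> - \<alpha>, -(\<alpha> + \<beta> + 2):] * F + [:1, 0, -1:] * pderiv F) x * jacobi_weight \<alpha> \<beta> x)
          has_integral 0) {-1..1}"
proof -
  define G where "G x = (1 - x) powr (\<alpha> + 1) * (1 + x) powr (\<beta> + 1) * poly F x" for x
  have cont: "continuous_on {-1..1} G"
    unfolding G_def using assms by (intro continuous_intros continuous_on_powr') auto
  have "(G has_vector_derivative
          poly ([:\<beta> - \<alpha>, -(\<alpha> + \<beta> + 2):] * F + [:1, 0, -1:] * pderiv F) x * jacobi_weight \<alpha> \<beta> x) (at x)"
    if x: "x \<in> {-1<..<1}" for x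
  proof -
    from x have pos: "1 - x > 0" "1 + x > 0" by auto
    have "(G has_real_derivative
            (- (\<alpha> + 1) * (1 - x) powr \<alpha> * (1 + x) powr (\<beta> + 1)
             + (\<beta> + 1) * (1 + x) powr \<beta> * (1 - x) powr (\<alpha> + 1)) * poly F x
            + poly (pderiv F) x * ((1 - x) powr (\<alpha> + 1) * (1 + x) powr (\<beta> + 1))) (at x)"
      unfolding G_def using pos by (auto intro!: derivative_eq_intros simp: algebra_simps)
    moreover have "(- (\<alpha> + 1) * (1 - x) powr \<alpha> * (1 + x) powr (\<beta> + 1)
             + (\<beta> + 1) * (1 + x) powr \<beta> * (1 - x) powr (\<alpha> + 1)) * poly F x
            + poly (pderiv F) x * ((1 - x) powr (\<alpha> + 1) * (1 + x) powr (\<beta> + 1))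
          = poly ([:\<beta> - \<alpha>, -(\<alpha> + \<beta> + 2):] * F + [:1, 0, -1:] * pderiv F) x * jacobi_weight \<alpha> \<beta> x"
      using pos by (simp add: jacobi_weight_def powr_add algebra_simps)
    ultimately show ?thesis by (simp add: has_real_derivative_iff_has_vector_derivative)
  qed
  from fundamental_theorem_of_calculus_interior[OF _ cont this]
  have "((\<lambda>x. poly ([:\<beta> - \<alpha>, -(\<alpha> + \<beta> + 2):] * F + [:1, 0, -1:] * pderiv F) x * jacobi_weight \<alpha> \<beta> x)
          has_integral (G 1 - G (-1))) {-1..1}"
    by auto
  moreover have "G 1 = 0" "G (-1) = 0" using assms by (auto simp: G_def)
  ultimately show ?thesis by simp
qed

definition jacobi_integral :: "real \<Rightarrow> real \<Rightarrow> real poly \<Rightarrow> real" where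
  "jacobi_integral \<alpha> \<beta> p = integral {-1..1} (\<lambda>x. poly p x * jacobi_weight \<alpha> \<beta> x)"

lemma jacobi_integral_smult: "jacobi_integral \<alpha> \<beta> (smult c p) = c * jacobi_integral \<alpha> \<beta> p"
  unfolding jacobi_integral_def by (simp add: mult.assoc)

lemma jacobi_integral_sum:
  assumes "\<alpha> > -1" "\<beta> > -1" "finite A"
  shows "jacobi_integral \<alpha> \<beta> (\<Sum>i\<in>A. f i) = (\<Sum>i\<in>A. jacobi_integral \<alpha> \<beta> (f i))"
  unfolding jacobi_integral_def poly_sum sum_distrib_right
  by (rule integral_sum[OF assms(3)]) (rule poly_jacobi_weight_integrable[OF assms(1,2)])

lemma has_integral_jacobi_integral:
  assumes "\<alpha> > -1" "\<beta> > -1"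
  shows "((\<lambda>x. poly p x * jacobi_weight \<alpha> \<beta> x) has_integral jacobi_integral \<alpha> \<beta> p) {-1..1}"
  unfolding jacobi_integral_def using poly_jacobi_weight_integrable[OF assms] by (rule integrable_integral)

text \<open>By continuity the integrand vanishes on \<open>[-1/2, 1/2]\<close>, so \<open>p\<close> has infinitely many roots.\<close>
lemma jacobi_integral_eq_0_imp_poly_eq_0:
  assumes "\<alpha> > -1" "\<beta> > -1"
    and nonneg: "\<And>x. x \<in> {-1<..<1} \<Longrightarrow> poly p x \<ge> 0"
    and "jacobi_integral \<alpha> \<beta> p = 0"
  shows "p = 0"
proof (rule ccontr)
  assume "p \<noteq> 0"
  define f where "f x = poly p x * jacobi_weight \<alpha> \<beta> x" for x
  have f_nonneg: "f x \<ge> 0" if "x \<in> {-1..1}" for x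
  proof (cases "x = -1 \<or> x = 1")
    case True then show ?thesis by (auto simp: f_def jacobi_weight_def)
  next
    case False
    with that nonneg[of x] show ?thesis by (simp add: f_def jacobi_weight_nonneg)
  qed
  have sub: "{-1/2..1/2} \<subseteq> {-1..1::real}" by auto
  have f_int: "(f has_integral 0) {-1..1}"
    using has_integral_jacobi_integral[OF assms(1,2), of p] assms(4) by (simp add: f_def[abs_def])
  then have f_int_sub: "f integrable_on {-1/2..1/2}"
    using integrable_subinterval_real[OF has_integral_integrable sub] by blast
  have "integral {-1/2..1/2} f \<le> 0"
    using has_integral_subset_le[OF sub integrable_integral[OF f_int_sub] f_int] f_nonneg by auto
  moreover have "integral {-1/2..1/2} f \<ge> 0"
    by (rule integral_nonneg[OF f_int_sub]) (use f_nonneg sub in auto)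
  ultimately have f_int_0: "(f has_integral 0) (cbox (-1/2) (1/2))"
    using integrable_integral[OF f_int_sub] by simp
  have cont: "continuous_on (cbox (-1/2) (1/2)) f"
    unfolding f_def jacobi_weight_def by (intro continuous_intros) auto
  have "poly p x = 0" if x: "x \<in> {-1/2..1/2}" for x
  proof -
    have "f x = 0"
      by (rule has_integral_0_cbox_imp_0[OF cont _ f_int_0]) (use f_nonneg x in auto)
    moreover have "jacobi_weight \<alpha> \<beta> x > 0" using x by (intro jacobi_weight_pos) auto
    ultimately show ?thesis by (simp add: f_def)
  qed
  then have "{-1/2..1/2::real} \<subseteq> {x. poly p x = 0}" by auto
  with poly_roots_finite[OF \<open>p \<noteq> 0\<close>] have "finite {-1/2..1/2::real}" by (rule finite_subset[rotated])
  then show False using infinite_Icc[of "-1/2" "1/2::real"] by simp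
qed

section \<open>Jacobi polynomials as polynomials\<close>

definition jacobi_coeff :: "nat \<Rightarrow> real \<Rightarrow> real \<Rightarrow> nat \<Rightarrow> real" where
  "jacobi_coeff n \<alpha> \<beta> k = Gamma (real n + \<alpha> + 1) / (fact n * Gamma (\<alpha> + 1)) *
     (pochhammer (- real n) k * pochhammer (real n + \<alpha> + \<beta> + 1) k / (pochhammer (\<alpha> + 1) k * fact k))"

text \<open>\<open>jacobi_tpoly n \<alpha> \<beta>\<close> is the Jacobi polynomial in the variable \<open>t = (1 - x) / 2\<close> of the
  hypergeometric series.\<close>
definition jacobi_tpoly :: "nat \<Rightarrow> real \<Rightarrow> real \<Rightarrow> real poly" where
  "jacobi_tpoly n \<alpha> \<beta> = (\<Sum>k\<le>n. monom (jacobi_coeff n \<alpha> \<beta> k) k)"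

definition jacobi_poly :: "nat \<Rightarrow> real \<Rightarrow> real \<Rightarrow> real poly" where
  "jacobi_poly n \<alpha> \<beta> = jacobi_tpoly n \<alpha> \<beta> \<circ>\<^sub>p [:1/2, -1/2:]"

lemma jacobi_coeff_eq_0: "n < k \<Longrightarrow> jacobi_coeff n \<alpha> \<beta> k = 0"
  unfolding jacobi_coeff_def by (subst pochhammer_eq_0_iff[THEN iffD2]) auto

lemma coeff_jacobi_tpoly: "coeff (jacobi_tpoly n \<alpha> \<beta>) k = jacobi_coeff n \<alpha> \<beta> k"
  unfolding jacobi_tpoly_def coeff_sum by (cases "k \<le> n") (auto simp: jacobi_coeff_eq_0)

lemma jacobiP_eq_poly_jacobi_tpoly: "jacobiP n \<alpha> \<beta> x = poly (jacobi_tpoly n \<alpha> \<beta>) ((1 - x) / 2)"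
  unfolding jacobiP_def jacobi_tpoly_def poly_sum poly_monom jacobi_coeff_def
  by (simp add: sum_distrib_left mult_ac)

lemma poly_jacobi_poly: "poly (jacobi_poly n \<alpha> \<beta>) x = jacobiP n \<alpha> \<beta> x"
  by (simp add: jacobi_poly_def poly_pcompose jacobiP_eq_poly_jacobi_tpoly diff_divide_distrib)

lemma jacobiP_eq_poly: "jacobiP n \<alpha> \<beta> = poly (jacobi_poly n \<alpha> \<beta>)"
  by (simp add: fun_eq_iff poly_jacobi_poly)

lemma jacobi_coeff_top_nonzero:
  assumes "\<alpha> > -1" "\<beta> > -1"
  shows "jacobi_coeff n \<alpha> \<beta> n \<noteq> 0"
proof -
  have "Gamma (real n + \<alpha> + 1) > 0" "Gamma (\<alpha> + 1) > 0" "pochhammer (\<alpha> + 1) n > 0"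
    using assms by (auto intro!: Gamma_real_pos pochhammer_pos)
  moreover have "pochhammer (- real n) n \<noteq> 0" by (subst pochhammer_eq_0_iff) auto
  moreover have "pochhammer (real n + \<alpha> + \<beta> + 1) n \<noteq> 0"
  proof (subst pochhammer_eq_0_iff, clarify)
    fix k assume "k < n" "real n + \<alpha> + \<beta> + 1 = - real k"
    then show False using assms by linarith
  qed
  ultimately show ?thesis unfolding jacobi_coeff_def by simp
qed

lemma degree_jacobi_tpoly:
  assumes "\<alpha> > -1" "\<beta> > -1"
  shows "degree (jacobi_tpoly n \<alpha> \<beta>) = n"
proof (rule antisym)
  show "degree (jacobi_tpoly n \<alpha> \<beta>) \<le> n"
    by (rule degree_le) (simp add: coeff_jacobi_tpoly jacobi_coeff_eq_0)
  show "n \<le> degree (jacobi_tpoly n \<alpha> \<beta>)"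
    by (rule le_degree) (simp add: coeff_jacobi_tpoly jacobi_coeff_top_nonzero assms)
qed

lemma degree_jacobi_poly:
  assumes "\<alpha> > -1" "\<beta> > -1"
  shows "degree (jacobi_poly n \<alpha> \<beta>) = n"
  by (simp add: jacobi_poly_def degree_pcompose degree_jacobi_tpoly assms)

lemma jacobi_poly_0: "\<alpha> > -1 \<Longrightarrow> jacobi_poly 0 \<alpha> \<beta> = 1"
proof -
  assume "\<alpha> > -1"
  then have "Gamma (\<alpha> + 1) > 0" by (intro Gamma_real_pos) auto
  then show ?thesis
    by (intro poly_eqI) (simp add: jacobi_poly_def jacobi_tpoly_def jacobi_coeff_def pcompose_1 coeff_1)
qed

lemma jacobi_poly_nonzero: "\<alpha> > -1 \<Longrightarrow> \<beta> > -1 \<Longrightarrow> jacobi_poly n \<alpha> \<beta> \<noteq> 0"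
  by (cases n) (auto simp: jacobi_poly_0 degree_jacobi_poly dest: arg_cong[where f = degree])

lemma jacobi_coeff_pderiv:
  assumes "\<alpha> > -1"
  shows "real (Suc k) * jacobi_coeff (Suc m) \<alpha> \<beta> (Suc k)
           = - (real m + \<alpha> + \<beta> + 2) * jacobi_coeff m (\<alpha> + 1) (\<beta> + 1) k"
proof -
  have g: "Gamma (\<alpha> + 1 + 1) = (\<alpha> + 1) * Gamma (\<alpha> + 1)"
    by (rule Gamma_plus1) (use assms in \<open>auto dest: nonpos_Ints_nonpos\<close>)
  have "Gamma (\<alpha> + 1) > 0" "pochhammer (\<alpha> + 2) k > 0"
    using assms by (auto intro!: Gamma_real_pos pochhammer_pos)
  moreover have
    "pochhammer (- real (Suc m)) (Suc k) = - (real m + 1) * pochhammer (- real m) k"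
    "pochhammer (real (Suc m) + \<alpha> + \<beta> + 1) (Suc k)
       = (real m + \<alpha> + \<beta> + 2) * pochhammer (real m + (\<alpha> + 1) + (\<beta> + 1) + 1) k"
    "pochhammer (\<alpha> + 1) (Suc k) = (\<alpha> + 1) * pochhammer (\<alpha> + 2) k"
    "real (Suc m) + \<alpha> + 1 = real m + (\<alpha> + 1) + 1"
    by (simp_all add: pochhammer_rec algebra_simps)
  ultimately show ?thesis
    using assms unfolding jacobi_coeff_def g
    by (simp add: fact_Suc divide_simps del: of_nat_Suc) (simp add: algebra_simps)
qed

lemma pderiv_jacobi_tpoly:
  assumes "\<alpha> > -1"
  shows "pderiv (jacobi_tpoly (Suc m) \<alpha> \<beta>)
           = smult (-(real m + \<alpha> + \<beta> + 2)) (jacobi_tpoly m (\<alpha> + 1) (\<beta> + 1))"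
  by (rule poly_eqI) (simp only: coeff_pderiv coeff_smult coeff_jacobi_tpoly jacobi_coeff_pderiv[OF assms])

lemma pderiv_pcompose_half_reflection:
  "pderiv (p \<circ>\<^sub>p [:1/2, -1/2:]) = smult (-1/2) (pderiv p \<circ>\<^sub>p [:1/2, -1/2:])"
  by (simp add: pderiv_pcompose pderiv_pCons)

lemma pderiv_jacobi_poly:
  assumes "\<alpha> > -1"
  shows "pderiv (jacobi_poly (Suc m) \<alpha> \<beta>)
           = smult ((real m + \<alpha> + \<beta> + 2) / 2) (jacobi_poly m (\<alpha> + 1) (\<beta> + 1))"
  unfolding jacobi_poly_def pderiv_pcompose_half_reflection pderiv_jacobi_tpoly[OF assms]
    pcompose_smult smult_smult
  by (rule arg_cong[where f = "\<lambda>c. smult c _"]) (simp add: field_simps)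

lemma deriv_jacobiP: "deriv (jacobiP n \<alpha> \<beta>) x = poly (pderiv (jacobi_poly n \<alpha> \<beta>)) x"
  unfolding jacobiP_eq_poly by (rule DERIV_imp_deriv[OF poly_DERIV])

lemma coeff_linear_mult:
  "coeff ([:a, b:] * p) k = a * coeff p k + (if k = 0 then 0 else b * coeff p (k - 1))"
  by (cases k) (simp_all add: coeff_pCons)

lemma coeff_quadratic_mult:
  "coeff ([:a, b, c:] * p) k = a * coeff p k + (if k = 0 then 0 else b * coeff p (k - 1))
     + (if k < 2 then 0 else c * coeff p (k - 2))"
  by (cases k; cases "k - 1") (simp_all add: coeff_pCons add.assoc)

lemma jacobi_coeff_Suc:
  assumes "\<alpha> > -1"
  shows "(real k + 1) * (real k + \<alpha> + 1) * jacobi_coeff n \<alpha> \<beta> (Suc k)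
           = (real k - real n) * (real k + real n + \<alpha> + \<beta> + 1) * jacobi_coeff n \<alpha> \<beta> k"
proof -
  have "pochhammer (\<alpha> + 1) k > 0" "real k + \<alpha> + 1 > 0" using assms by (auto intro!: pochhammer_pos)
  then show ?thesis unfolding jacobi_coeff_def pochhammer_Suc fact_Suc
    by (simp add: divide_simps) (simp add: algebra_simps)
qed

text \<open>The hypergeometric differential equation of \<open>\<^sub>2F\<^sub>1(-n, n + \<alpha> + \<beta> + 1; \<alpha> + 1; t)\<close>.\<close>
lemma jacobi_tpoly_ode:
  assumes "\<alpha> > -1"
  shows "[:0, 1, -1:] * pderiv (pderiv (jacobi_tpoly n \<alpha> \<beta>))
           + [:\<alpha> + 1, -(\<alpha> + \<beta> + 2):] * pderiv (jacobi_tpoly n \<alpha> \<beta>)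
           + smult (real n * (real n + \<alpha> + \<beta> + 1)) (jacobi_tpoly n \<alpha> \<beta>) = 0"
proof (rule poly_eqI)
  fix k
  have "(real j + 1) * (real j + \<alpha> + 1) * jacobi_coeff n \<alpha> \<beta> (Suc j)
          = (real j - real n) * (real j + real n + \<alpha> + \<beta> + 1) * jacobi_coeff n \<alpha> \<beta> j" for j
    by (rule jacobi_coeff_Suc[OF assms])
  from this[of k] show "coeff ([:0, 1, -1:] * pderiv (pderiv (jacobi_tpoly n \<alpha> \<beta>))
           + [:\<alpha> + 1, -(\<alpha> + \<beta> + 2):] * pderiv (jacobi_tpoly n \<alpha> \<beta>)
           + smult (real n * (real n + \<alpha> + \<beta> + 1)) (jacobi_tpoly n \<alpha> \<beta>)) k = coeff 0 k"
    by (cases k; cases "k - 1")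
       (simp_all add: coeff_quadratic_mult coeff_linear_mult coeff_pderiv coeff_jacobi_tpoly algebra_simps)
qed

lemma jacobi_poly_ode:
  assumes "\<alpha> > -1"
  shows "(1 - x\<^sup>2) * poly (pderiv (pderiv (jacobi_poly n \<alpha> \<beta>))) x
           + (\<beta> - \<alpha> - (\<alpha> + \<beta> + 2) * x) * poly (pderiv (jacobi_poly n \<alpha> \<beta>)) x
           + real n * (real n + \<alpha> + \<beta> + 1) * poly (jacobi_poly n \<alpha> \<beta>) x = 0"
proof -
  define t where "t = (1 - x) / 2"
  define Y where "Y = jacobi_tpoly n \<alpha> \<beta>"
  have "poly ([:0, 1, -1:] * pderiv (pderiv Y) + [:\<alpha> + 1, -(\<alpha> + \<beta> + 2):] * pderiv Y
          + smult (real n * (real n + \<alpha> + \<beta> + 1)) Y) t = 0"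
    using jacobi_tpoly_ode[OF assms] by (simp add: Y_def)
  then have ode_t: "(t - t\<^sup>2) * poly (pderiv (pderiv Y)) t + (\<alpha> + 1 - (\<alpha> + \<beta> + 2) * t) * poly (pderiv Y) t
      + real n * (real n + \<alpha> + \<beta> + 1) * poly Y t = 0"
    by (simp add: algebra_simps power2_eq_square)
  have chain:
    "poly (jacobi_poly n \<alpha> \<beta>) x = poly Y t"
    "poly (pderiv (jacobi_poly n \<alpha> \<beta>)) x = -1/2 * poly (pderiv Y) t"
    "poly (pderiv (pderiv (jacobi_poly n \<alpha> \<beta>))) x = 1/4 * poly (pderiv (pderiv Y)) t"
    unfolding jacobi_poly_def Y_def pderiv_pcompose_half_reflection pderiv_smult
    by (simp_all add: poly_pcompose t_def diff_divide_distrib)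
  show ?thesis
    using ode_t unfolding chain t_def by (simp add: field_simps power2_eq_square)
qed

section \<open>Orthogonality and expansions\<close>

lemma jacobi_poly_ode_mult:
  fixes n :: nat and \<alpha> \<beta> x :: real and g :: "real poly"
  assumes "\<alpha> > -1"
  defines "P \<equiv> jacobi_poly n \<alpha> \<beta>"
  shows "poly ([:\<beta> - \<alpha>, -(\<alpha> + \<beta> + 2):] * (pderiv P * g) + [:1, 0, -1:] * pderiv (pderiv P * g)) x
           = - (real n * (real n + \<alpha> + \<beta> + 1)) * poly (P * g) x + poly (pderiv P * pderiv g) x * (1 - x\<^sup>2)"
proof -
  have ode: "(1 - x\<^sup>2) * poly (pderiv (pderiv P)) x + (\<beta> - \<alpha> - (\<alpha> + \<beta> + 2) * x) * poly (pderiv P) x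
          = - (real n * (real n + \<alpha> + \<beta> + 1)) * poly P x"
    using jacobi_poly_ode[OF assms(1), of x n \<beta>] unfolding P_def
    by (simp only: mult_minus_left eq_neg_iff_add_eq_0)
  have "poly ([:\<beta> - \<alpha>, -(\<alpha> + \<beta> + 2):] * (pderiv P * g) + [:1, 0, -1:] * pderiv (pderiv P * g)) x
      = poly g x * ((1 - x\<^sup>2) * poly (pderiv (pderiv P)) x + (\<beta> - \<alpha> - (\<alpha> + \<beta> + 2) * x) * poly (pderiv P) x)
        + (1 - x\<^sup>2) * poly (pderiv P) x * poly (pderiv g) x"
    by (simp add: pderiv_mult algebra_simps power2_eq_square)
  also have "\<dots> = poly g x * (- (real n * (real n + \<alpha> + \<beta> + 1)) * poly P x)
        + (1 - x\<^sup>2) * poly (pderiv P) x * poly (pderiv g) x"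
    by (simp only: ode)
  finally show ?thesis by (simp add: algebra_simps)
qed

lemma jacobi_integral_by_parts:
  assumes "\<alpha> > -1" "\<beta> > -1"
  shows "real n * (real n + \<alpha> + \<beta> + 1) * jacobi_integral \<alpha> \<beta> (jacobi_poly n \<alpha> \<beta> * g)
       = jacobi_integral (\<alpha> + 1) (\<beta> + 1) (pderiv (jacobi_poly n \<alpha> \<beta>) * pderiv g)"
proof -
  define P where "P = jacobi_poly n \<alpha> \<beta>"
  define lam where "lam = real n * (real n + \<alpha> + \<beta> + 1)"
  have "((\<lambda>x. poly (pderiv P * pderiv g) x * jacobi_weight (\<alpha> + 1) (\<beta> + 1) x)
         has_integral jacobi_integral (\<alpha> + 1) (\<beta> + 1) (pderiv P * pderiv g)) {-1..1}"
    by (rule has_integral_jacobi_integral) (use assms in auto)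
  then have "((\<lambda>x. poly (pderiv P * pderiv g) x * jacobi_weight \<alpha> \<beta> x * (1 - x\<^sup>2))
         has_integral jacobi_integral (\<alpha> + 1) (\<beta> + 1) (pderiv P * pderiv g)) {-1..1}"
    by (rule has_integral_eq[rotated]) (simp add: jacobi_weight_plus_one)
  then have "((\<lambda>x. - lam * (poly (P * g) x * jacobi_weight \<alpha> \<beta> x)
                  + poly (pderiv P * pderiv g) x * jacobi_weight \<alpha> \<beta> x * (1 - x\<^sup>2))
          has_integral - lam * jacobi_integral \<alpha> \<beta> (P * g)
                       + jacobi_integral (\<alpha> + 1) (\<beta> + 1) (pderiv P * pderiv g)) {-1..1}"
    by (intro has_integral_add has_integral_mult_right has_integral_jacobi_integral assms)
  moreover have "((\<lambda>x. - lam * (poly (P * g) x * jacobi_weight \<alpha> \<beta> x)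
                  + poly (pderiv P * pderiv g) x * jacobi_weight \<alpha> \<beta> x * (1 - x\<^sup>2)) has_integral 0) {-1..1}"
    using has_integral_jacobi_weight_derivative_0[OF assms, of "pderiv P * g"]
    by (rule has_integral_eq[rotated])
       (simp only: jacobi_poly_ode_mult[OF assms(1)] P_def lam_def, simp add: algebra_simps)
  ultimately have "- lam * jacobi_integral \<alpha> \<beta> (P * g)
                     + jacobi_integral (\<alpha> + 1) (\<beta> + 1) (pderiv P * pderiv g) = 0"
    by (rule has_integral_unique)
  then show ?thesis unfolding P_def[symmetric] lam_def[symmetric] by linarith
qed

lemma Gamma_plus1_pos: "z > 0 \<Longrightarrow> Gamma (z + 1) = z * Gamma (z::real)"
  by (rule Gamma_plus1) (auto dest: nonpos_Ints_nonpos)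

lemma jacobi_gamma_Suc:
  assumes "\<alpha> > -1" "\<beta> > -1"
  shows "jacobi_gamma (Suc m) \<alpha> \<beta> = (real m + \<alpha> + \<beta> + 2) / (4 * (real m + 1)) * jacobi_gamma m (\<alpha> + 1) (\<beta> + 1)"
proof -
  define s where "s = real m + \<alpha> + \<beta> + 2"
  define d where "d = 2 * real m + \<alpha> + \<beta> + 3"
  define c where "c = 2 powr (\<alpha> + \<beta> + 1) * Gamma (real m + \<alpha> + 2) * Gamma (real m + \<beta> + 2)"
  have s: "s > 0" and d: "d > 0" using assms by (simp_all add: s_def d_def)
  have Gs: "Gamma s > 0" using s by (rule Gamma_real_pos)
  have Gs1: "Gamma (s + 1) = s * Gamma s" using s by (rule Gamma_plus1_pos)
  have pw: "2 powr (\<alpha> + 1 + (\<beta> + 1) + 1) = 4 * 2 powr (\<alpha> + \<beta> + 1)"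
    by (simp add: powr_add[symmetric] add_ac) (simp add: powr_add)
  have lhs: "jacobi_gamma (Suc m) \<alpha> \<beta> = c / (d * fact (Suc m) * Gamma s)"
    by (simp add: jacobi_gamma_def c_def s_def d_def add_ac)
  have rhs: "jacobi_gamma m (\<alpha> + 1) (\<beta> + 1) = 4 * c / (d * fact m * (s * Gamma s))"
  proof (cases "m = 0")
    case True
    have G: "Gamma (\<alpha> + 1 + (\<beta> + 1) + 2) = d * (s * Gamma s)"
      using Gamma_plus1_pos[of "s + 1"] Gs1 s True by (simp add: s_def d_def add_ac)
    show ?thesis unfolding True jacobi_gamma_def G pw by (simp add: c_def True add.commute)
  next
    case False
    have G: "Gamma (real m + (\<alpha> + 1) + (\<beta> + 1) + 1) = s * Gamma s"
      using Gs1 by (simp add: s_def add_ac)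
    show ?thesis unfolding jacobi_gamma_def G pw using False by (simp add: c_def d_def add_ac)
  qed
  show ?thesis
    unfolding lhs rhs s_def[symmetric] using s d Gs by (simp add: fact_Suc divide_simps)
qed

lemma jacobi_gamma_pos:
  assumes "\<alpha> > -1" "\<beta> > -1"
  shows "jacobi_gamma n \<alpha> \<beta> > 0"
  using assms by (auto simp: jacobi_gamma_def intro!: Gamma_real_pos divide_pos_pos mult_pos_pos)

text \<open>Induction on \<open>n\<close>: by parts, \<open>P_(n+1)^(\<alpha>,\<beta>)\<close> against \<open>g\<close> reduces to
  \<open>P_n^(\<alpha>+1,\<beta>+1)\<close> against \<open>g'\<close>.\<close>
lemma jacobi_poly_orthogonal:
  assumes "\<alpha> > -1" "\<beta> > -1"
  shows "(\<forall>g. degree g < n \<longrightarrow> jacobi_integral \<alpha> \<beta> (jacobi_poly n \<alpha> \<beta> * g) = 0) \<and>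
         jacobi_integral \<alpha> \<beta> (jacobi_poly n \<alpha> \<beta> * jacobi_poly n \<alpha> \<beta>) = jacobi_gamma n \<alpha> \<beta>"
  using assms
proof (induction n arbitrary: \<alpha> \<beta>)
  case 0
  then have "integral {-1..1} (jacobi_weight \<alpha> \<beta>) = 2 powr (\<alpha> + \<beta> + 1) * Beta (\<alpha> + 1) (\<beta> + 1)"
    by (intro integral_unique jacobi_weight_has_integral) auto
  moreover have "\<alpha> + 1 + (\<beta> + 1) = \<alpha> + \<beta> + 2" by simp
  ultimately show ?case
    using 0 by (simp add: jacobi_integral_def jacobi_poly_0 jacobi_gamma_def Beta_def)
next
  case (Suc m)
  define P where "P = jacobi_poly (Suc m) \<alpha> \<beta>"
  define Q where "Q = jacobi_poly m (\<alpha> + 1) (\<beta> + 1)"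
  define c where "c = (real m + \<alpha> + \<beta> + 2) / 2"
  define lam where "lam = real (Suc m) * (real (Suc m) + \<alpha> + \<beta> + 1)"
  have IH: "(\<forall>g. degree g < m \<longrightarrow> jacobi_integral (\<alpha> + 1) (\<beta> + 1) (Q * g) = 0)"
    "jacobi_integral (\<alpha> + 1) (\<beta> + 1) (Q * Q) = jacobi_gamma m (\<alpha> + 1) (\<beta> + 1)"
    using Suc.IH[of "\<alpha> + 1" "\<beta> + 1"] Suc.prems by (auto simp: Q_def)
  have lam: "lam > 0" using Suc.prems by (simp add: lam_def)
  have dP: "pderiv P = smult c Q" unfolding P_def Q_def c_def by (rule pderiv_jacobi_poly) (use Suc in auto)
  have parts: "lam * jacobi_integral \<alpha> \<beta> (P * g) = c * jacobi_integral (\<alpha> + 1) (\<beta> + 1) (Q * pderiv g)" for g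
    using jacobi_integral_by_parts[OF Suc.prems, of "Suc m" g]
    unfolding P_def[symmetric] lam_def[symmetric] dP by (simp add: jacobi_integral_smult)
  have "jacobi_integral \<alpha> \<beta> (P * g) = 0" if "degree g < Suc m" for g
  proof -
    have "jacobi_integral (\<alpha> + 1) (\<beta> + 1) (Q * pderiv g) = 0"
    proof (cases "pderiv g = 0")
      case True then show ?thesis by (simp add: jacobi_integral_def)
    next
      case False
      then have "degree (pderiv g) < m"
        using that pderiv_eq_0_iff[of g] by (simp add: degree_pderiv)
      then show ?thesis using IH(1) by blast
    qed
    then show ?thesis using parts[of g] lam by simp
  qed
  moreover
  have "c * c = lam * ((real m + \<alpha> + \<beta> + 2) / (4 * (real m + 1)))"
    unfolding c_def lam_def by (simp add: field_simps)
  then have "lam * jacobi_integral \<alpha> \<beta> (P * P) = lam * jacobi_gamma (Suc m) \<alpha> \<beta>"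
    using parts[of P] IH(2) unfolding jacobi_gamma_Suc[OF Suc.prems]
    by (simp add: dP jacobi_integral_smult mult.assoc[symmetric])
  then have "jacobi_integral \<alpha> \<beta> (P * P) = jacobi_gamma (Suc m) \<alpha> \<beta>"
    using lam by simp
  ultimately show ?case by (simp add: P_def)
qed

lemma jacobi_integral_jacobi_poly_mult:
  assumes "\<alpha> > -1" "\<beta> > -1"
  shows "jacobi_integral \<alpha> \<beta> (jacobi_poly m \<alpha> \<beta> * jacobi_poly k \<alpha> \<beta>)
           = (if m = k then jacobi_gamma m \<alpha> \<beta> else 0)"
proof (cases m k rule: linorder_cases)
  case less
  have comm: "jacobi_poly m \<alpha> \<beta> * jacobi_poly k \<alpha> \<beta> = jacobi_poly k \<alpha> \<beta> * jacobi_poly m \<alpha> \<beta>"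
    by (rule mult.commute)
  show ?thesis unfolding comm
    using less jacobi_poly_orthogonal[OF assms, of k] degree_jacobi_poly[OF assms, of m] by simp
next
  case greater
  then show ?thesis using jacobi_poly_orthogonal[OF assms, of m] degree_jacobi_poly[OF assms, of k] by simp
qed (use jacobi_poly_orthogonal[OF assms, of m] in simp)

lemma ex_expansion_in_degree_basis:
  fixes B :: "nat \<Rightarrow> 'a::field poly"
  assumes deg_B: "\<And>k. degree (B k) = k" and nonzero_B: "\<And>k. B k \<noteq> 0"
  shows "degree p \<le> n \<Longrightarrow> \<exists>c. p = (\<Sum>k\<le>n. smult (c k) (B k))"
proof (induction n arbitrary: p)
  case 0
  have B0: "coeff (B 0) 0 \<noteq> 0" using nonzero_B[of 0] deg_B[of 0] by (metis leading_coeff_0_iff)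
  have deg0: "degree p = 0" "degree (B 0) = 0" using 0 deg_B[of 0] by auto
  have "p = smult (coeff p 0 / coeff (B 0) 0) (B 0)"
  proof (intro poly_eqI)
    fix i
    show "coeff p i = coeff (smult (coeff p 0 / coeff (B 0) 0) (B 0)) i"
      using B0 deg0 by (cases i) (auto simp: coeff_eq_0)
  qed
  then show ?case by (intro exI[of _ "\<lambda>_. coeff p 0 / coeff (B 0) 0"]) simp
next
  case (Suc n)
  define a where "a = coeff p (Suc n) / lead_coeff (B (Suc n))"
  define p' where "p' = p - smult a (B (Suc n))"
  have lc: "lead_coeff (B (Suc n)) \<noteq> 0" using nonzero_B by simp
  have "degree p' \<le> n"
  proof (rule degree_le, intro allI impI)
    fix i assume "n < i"
    then consider "i = Suc n" | "i > Suc n" by linarith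
    then show "coeff p' i = 0"
    proof cases
      case 1 then show ?thesis using lc deg_B[of "Suc n"] by (simp add: p'_def a_def)
    next
      case 2 then show ?thesis using Suc.prems deg_B[of "Suc n"] by (simp add: p'_def coeff_eq_0)
    qed
  qed
  then obtain c where c: "p' = (\<Sum>k\<le>n. smult (c k) (B k))" using Suc.IH by blast
  have "p = p' + smult a (B (Suc n))" by (simp add: p'_def)
  also have "\<dots> = (\<Sum>k\<le>Suc n. smult ((c(Suc n := a)) k) (B k))"
    unfolding c sum.atMost_Suc by simp
  finally show ?case by blast
qed

lemma expansion_in_degree_basis_unique:
  fixes B :: "nat \<Rightarrow> 'a::field poly"
  assumes deg_B: "\<And>k. degree (B k) = k" and nonzero_B: "\<And>k. B k \<noteq> 0"
  shows "(\<Sum>k\<le>n. smult (c k) (B k)) = 0 \<Longrightarrow> k \<le> n \<Longrightarrow> c k = 0"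
proof (induction n arbitrary: k)
  case 0
  then show ?case using nonzero_B by auto
next
  case (Suc n)
  have "coeff (\<Sum>k\<le>n. smult (c k) (B k)) (Suc n) = 0"
    unfolding coeff_sum using deg_B by (auto intro!: sum.neutral simp: coeff_eq_0)
  then have "c (Suc n) * lead_coeff (B (Suc n)) = 0"
    using arg_cong[OF Suc.prems(1), of "\<lambda>p. coeff p (Suc n)"] by (simp add: deg_B)
  then have "c (Suc n) = 0" using nonzero_B by simp
  moreover from this have "(\<Sum>k\<le>n. smult (c k) (B k)) = 0" using Suc.prems(1) by simp
  ultimately show ?case using Suc.IH[of k] Suc.prems(2) by (cases "k = Suc n") auto
qed

lemma jacobi_orthogonal_expansion:
  assumes "\<alpha> > -1" "\<beta> > -1" "degree p \<le> n"
  shows "p = (\<Sum>k\<le>n. smult (jacobi_integral \<alpha> \<beta> (jacobi_poly k \<alpha> \<beta> * p) / jacobi_gamma k \<alpha> \<beta>)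
                        (jacobi_poly k \<alpha> \<beta>))"
proof -
  obtain c where c: "p = (\<Sum>k\<le>n. smult (c k) (jacobi_poly k \<alpha> \<beta>))"
    using ex_expansion_in_degree_basis[OF degree_jacobi_poly[OF assms(1,2)] jacobi_poly_nonzero[OF assms(1,2)]
        assms(3)] by blast
  have "jacobi_integral \<alpha> \<beta> (jacobi_poly m \<alpha> \<beta> * p) / jacobi_gamma m \<alpha> \<beta> = c m" if "m \<le> n" for m
  proof -
    have "jacobi_integral \<alpha> \<beta> (jacobi_poly m \<alpha> \<beta> * p)
            = (\<Sum>k\<le>n. c k * jacobi_integral \<alpha> \<beta> (jacobi_poly m \<alpha> \<beta> * jacobi_poly k \<alpha> \<beta>))"
      unfolding c sum_distrib_left mult_smult_right jacobi_integral_sum[OF assms(1,2) finite_atMost]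
        jacobi_integral_smult ..
    also have "\<dots> = (\<Sum>k\<le>n. if k = m then c m * jacobi_gamma m \<alpha> \<beta> else 0)"
      by (rule sum.cong) (auto simp: jacobi_integral_jacobi_poly_mult[OF assms(1,2)])
    also have "\<dots> = c m * jacobi_gamma m \<alpha> \<beta>" using that by simp
    finally show ?thesis using jacobi_gamma_pos[OF assms(1,2), of m] by simp
  qed
  then show ?thesis by (subst (1) c) (auto intro!: sum.cong)
qed

text \<open>Existence and uniqueness of the expansion make the definite description in \<open>conn_coeff\<close>
  well defined.\<close>
lemma jacobiP_connection_expansion:
  assumes "\<alpha> > -1" "\<beta> > -1" "a > -1" "b > -1"
  shows "jacobiP n \<alpha> \<beta> x = (\<Sum>k\<le>n. conn_coeff \<alpha> \<beta> a b k n * jacobiP k a b x)"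
proof -
  define c where "c k = (if k \<le> n then jacobi_integral a b (jacobi_poly k a b * jacobi_poly n \<alpha> \<beta>)
                                        / jacobi_gamma k a b else 0)" for k
  let ?expands = "\<lambda>c. (\<forall>k>n. c k = 0) \<and> (\<forall>x. jacobiP n \<alpha> \<beta> x = (\<Sum>k\<le>n. c k * jacobiP k a b x))"
  have expansion: "jacobi_poly n \<alpha> \<beta> = (\<Sum>k\<le>n. smult (c k) (jacobi_poly k a b))"
    unfolding c_def using jacobi_orthogonal_expansion[OF assms(3,4), of "jacobi_poly n \<alpha> \<beta>" n]
    by (simp add: degree_jacobi_poly assms)
  have c: "?expands c"
  proof (intro conjI allI impI)
    fix x
    show "jacobiP n \<alpha> \<beta> x = (\<Sum>k\<le>n. c k * jacobiP k a b x)"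
      unfolding jacobiP_eq_poly by (subst expansion) (simp add: poly_sum)
  qed (simp add: c_def)
  have unique: "d = c" if "?expands d" for d
  proof
    fix k
    have "poly (\<Sum>k\<le>n. smult (d k - c k) (jacobi_poly k a b)) x
            = (\<Sum>k\<le>n. d k * jacobiP k a b x) - (\<Sum>k\<le>n. c k * jacobiP k a b x)" for x
      unfolding poly_sum sum_subtractf[symmetric]
      by (rule sum.cong) (auto simp: jacobiP_eq_poly algebra_simps)
    also have "\<dots> x = 0" for x using that c by simp
    finally have "(\<Sum>k\<le>n. smult (d k - c k) (jacobi_poly k a b)) = 0"
      using poly_all_0_iff_0 by blast
    then have "k \<le> n \<Longrightarrow> d k - c k = 0"
      using expansion_in_degree_basis_unique[OF degree_jacobi_poly[OF assms(3,4)]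
          jacobi_poly_nonzero[OF assms(3,4)], of "\<lambda>k. d k - c k" n k] by simp
    then show "d k = c k" using that c by (cases "k \<le> n") auto
  qed
  have "(THE c. ?expands c) = c" by (rule the_equality) (use c unique in auto)
  then have "conn_coeff \<alpha> \<beta> a b k n = c k" for k by (simp add: conn_coeff_def)
  then show ?thesis using c by simp
qed

lemma sum_atMost_triangle_swap:
  fixes f :: "nat \<Rightarrow> nat \<Rightarrow> 'a::comm_monoid_add"
  shows "(\<Sum>n\<le>M. \<Sum>k\<le>n. f n k) = (\<Sum>k\<le>M. \<Sum>n=k..M. f n k)"
proof (induction M)
  case (Suc M)
  have "(\<Sum>n\<le>Suc M. \<Sum>k\<le>n. f n k) = (\<Sum>k\<le>M. (\<Sum>n=k..M. f n k) + f (Suc M) k) + f (Suc M) (Suc M)"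
    using Suc by (simp add: sum.distrib add.assoc)
  also have "\<dots> = (\<Sum>k\<le>Suc M. \<Sum>n=k..Suc M. f n k)"
    by (simp add: sum.cl_ivl_Suc add.assoc)
  finally show ?case .
qed simp

lemma jacobiP_connection_sum:
  assumes "\<alpha> > -1" "\<beta> > -1" "a > -1" "b > -1"
  shows "(\<Sum>n\<le>M. c n * jacobiP n \<alpha> \<beta> x)
           = (\<Sum>l\<le>M. (\<Sum>n=l..M. conn_coeff \<alpha> \<beta> a b l n * c n) * jacobiP l a b x)"
proof -
  have "(\<Sum>n\<le>M. c n * jacobiP n \<alpha> \<beta> x)
          = (\<Sum>n\<le>M. \<Sum>l\<le>n. conn_coeff \<alpha> \<beta> a b l n * c n * jacobiP l a b x)"
    by (simp add: jacobiP_connection_expansion[OF assms] sum_distrib_left mult_ac)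
  also have "\<dots> = (\<Sum>l\<le>M. (\<Sum>n=l..M. conn_coeff \<alpha> \<beta> a b l n * c n) * jacobiP l a b x)"
    by (simp add: sum_atMost_triangle_swap sum_distrib_right)
  finally show ?thesis .
qed

section \<open>The recurrence for \<open>P_l^(\<mu>,1-\<mu>)\<close> in powers of \<open>1 + x\<close>\<close>

lemma pochhammer_plus_1: "a \<noteq> 0 \<Longrightarrow> pochhammer (a + 1) n = pochhammer a n * (a + of_nat n) / a"
  for a :: "'a::field"
  using pochhammer_rec[of a n] pochhammer_Suc[of a n] by (simp add: field_simps)

lemma jacobi_coeff_mu:
  assumes "\<mu> > -1"
  shows "jacobi_coeff n \<mu> (1 - \<mu>) k = pochhammer (\<mu> + 1) n / fact n *
     (pochhammer (- real n) k * pochhammer (real n + 2) k / (pochhammer (\<mu> + 1) k * fact k))"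
proof -
  have "\<mu> + 1 \<notin> \<int>\<^sub>\<le>\<^sub>0" using assms by (auto dest: nonpos_Ints_nonpos)
  moreover have "Gamma (\<mu> + 1) > 0" using assms by (intro Gamma_real_pos) simp
  ultimately have "Gamma (real n + \<mu> + 1) = pochhammer (\<mu> + 1) n * Gamma (\<mu> + 1)"
    using pochhammer_Gamma[of "\<mu> + 1" n] by (simp add: add_ac)
  moreover have "real n + \<mu> + (1 - \<mu>) + 1 = real n + 2" by simp
  ultimately show ?thesis
    unfolding jacobi_coeff_def using \<open>Gamma (\<mu> + 1) > 0\<close> by (simp add: add_ac)
qed

lemma coeff_jacobi_tpoly_mu_recurrence:
  assumes "\<mu> > -1"
  shows "coeff ([:2, -2:] * jacobi_tpoly (Suc m) \<mu> (1 - \<mu>)) k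
         = rec_a (Suc (Suc m)) * jacobi_coeff (Suc (Suc m)) \<mu> (1 - \<mu>) k
           + (rec_b \<mu> (Suc m) + 1) * jacobi_coeff (Suc m) \<mu> (1 - \<mu>) k
           + rec_c \<mu> m * jacobi_coeff m \<mu> (1 - \<mu>) k"
proof (cases k)
  case 0
  have "pochhammer (\<mu> + 1) m > 0" using assms by (intro pochhammer_pos) auto
  then show ?thesis
    unfolding coeff_linear_mult coeff_jacobi_tpoly using 0 assms
    by (simp add: jacobi_coeff_mu pochhammer_Suc rec_a_def rec_b_def rec_c_def divide_simps)
       (simp add: algebra_simps)
next
  case (Suc i)
  \<comment> \<open>All Pochhammer symbols are expressed through \<open>A\<close>, \<open>B\<close> and \<open>U\<close>; what remains is a rational identity.\<close>
  define A where "A = pochhammer (- real (Suc m)) i"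
  define B where "B = pochhammer (real (Suc m) + 2) i"
  define U where "U = pochhammer (\<mu> + 1) i"
  have pos: "pochhammer (\<mu> + 1) m > 0" "U > 0" using assms by (auto simp: U_def intro!: pochhammer_pos)
  have shift_A: "pochhammer (- real m) i = A * (- real (Suc m) + real i) / - real (Suc m)"
    using pochhammer_plus_1[of "- real (Suc m)" i] by (simp add: A_def)
  have shift_B: "pochhammer (real (Suc (Suc m)) + 2) i = B * (real (Suc m) + 2 + real i) / (real (Suc m) + 2)"
    using pochhammer_plus_1[of "real (Suc m) + 2" i] by (simp add: B_def add_ac)
  have "- real (Suc (Suc m)) + 1 = - real (Suc m)" "real m + 2 + 1 = real (Suc m) + 2" by simp_all
  then have poch_rec:
    "pochhammer (- real (Suc (Suc m))) (Suc i) = - real (Suc (Suc m)) * A"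
    "pochhammer (real m + 2) (Suc i) = (real m + 2) * B"
    unfolding A_def B_def pochhammer_rec[of _ i] by simp_all
  have poch_Suc:
    "pochhammer (- real (Suc m)) (Suc i) = A * (- real (Suc m) + real i)"
    "pochhammer (real (Suc m) + 2) (Suc i) = B * (real (Suc m) + 2 + real i)"
    "pochhammer (real (Suc (Suc m)) + 2) (Suc i)
       = B * (real (Suc m) + 2 + real i) / (real (Suc m) + 2) * (real (Suc (Suc m)) + 2 + real i)"
    "pochhammer (- real m) (Suc i) = A * (- real (Suc m) + real i) / - real (Suc m) * (- real m + real i)"
    unfolding A_def B_def pochhammer_Suc[of _ i] shift_A shift_B by simp_all
  show ?thesis
    unfolding coeff_linear_mult coeff_jacobi_tpoly Suc diff_Suc_1 jacobi_coeff_mu[OF assms]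
      poch_rec poch_Suc A_def[symmetric] B_def[symmetric]
    using pos assms
    by (simp add: pochhammer_Suc U_def[symmetric] rec_a_def rec_b_def rec_c_def divide_simps)
       (simp add: algebra_simps)
qed

lemma coeff_jacobi_tpoly_mu_recurrence_0:
  assumes "\<mu> > -1"
  shows "coeff ([:2, -2:] * jacobi_tpoly 0 \<mu> (1 - \<mu>)) k
         = rec_a 1 * jacobi_coeff 1 \<mu> (1 - \<mu>) k + (rec_b \<mu> 0 + 1) * jacobi_coeff 0 \<mu> (1 - \<mu>) k"
  unfolding coeff_linear_mult coeff_jacobi_tpoly using assms
  by (cases k; cases "k - 1") (auto simp: jacobi_coeff_mu jacobi_coeff_eq_0 rec_a_def rec_b_def field_simps)

lemma jacobi_tpoly_mu_recurrence:
  assumes "\<mu> > -1"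
  shows "[:2, -2:] * jacobi_tpoly l \<mu> (1 - \<mu>)
           = smult (rec_a (l + 1)) (jacobi_tpoly (l + 1) \<mu> (1 - \<mu>))
             + smult (rec_b \<mu> l + 1) (jacobi_tpoly l \<mu> (1 - \<mu>))
             + (if l = 0 then 0 else smult (rec_c \<mu> (l - 1)) (jacobi_tpoly (l - 1) \<mu> (1 - \<mu>)))"
  using coeff_jacobi_tpoly_mu_recurrence_0[OF assms] coeff_jacobi_tpoly_mu_recurrence[OF assms]
  by (cases l) (auto intro!: poly_eqI simp: coeff_jacobi_tpoly)

text \<open>This is the three-term recurrence for \<open>P_l^(\<mu>,1-\<mu>)\<close> with \<open>x\<close> replaced by \<open>1 + x\<close>, which
  shifts \<open>b_l\<close> by one; the lowest index has no \<open>c\<close>-term since \<open>c\<^sub>-\<^sub>1 = 0\<close>.\<close>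
lemma jacobiP_mu_recurrence:
  assumes "\<mu> > -1"
  shows "(1 + x) * jacobiP l \<mu> (1 - \<mu>) x
           = rec_a (l + 1) * jacobiP (l + 1) \<mu> (1 - \<mu>) x + (rec_b \<mu> l + 1) * jacobiP l \<mu> (1 - \<mu>) x
             + (if l = 0 then 0 else rec_c \<mu> (l - 1) * jacobiP (l - 1) \<mu> (1 - \<mu>) x)"
proof -
  have "(1 + x) * jacobiP l \<mu> (1 - \<mu>) x = poly ([:2, -2:] * jacobi_tpoly l \<mu> (1 - \<mu>)) ((1 - x) / 2)"
    by (simp add: jacobiP_eq_poly_jacobi_tpoly field_simps)
  then show ?thesis
    unfolding jacobi_tpoly_mu_recurrence[OF assms] by (simp add: jacobiP_eq_poly_jacobi_tpoly)
qed

lemma sum_one_plus_x_jacobiP_mu_telescoping: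
  assumes "\<mu> > -1"
  shows "(\<Sum>l<n. r (l + 1) * ((1 + x) * jacobiP l \<mu> (1 - \<mu>) x))
           = (\<Sum>i<n. rec_a (i + 1) * r (i + 1) * jacobiP (i + 1) \<mu> (1 - \<mu>) x)
             + (\<Sum>i<n. (rec_b \<mu> i + 1) * r (i + 1) * jacobiP i \<mu> (1 - \<mu>) x)
             + (\<Sum>i<n - 1. rec_c \<mu> i * r (i + 2) * jacobiP i \<mu> (1 - \<mu>) x)"
proof (induction n)
  case (Suc n)
  have "r (n + 1) * ((1 + x) * jacobiP n \<mu> (1 - \<mu>) x)
          = rec_a (n + 1) * r (n + 1) * jacobiP (n + 1) \<mu> (1 - \<mu>) x
            + (rec_b \<mu> n + 1) * r (n + 1) * jacobiP n \<mu> (1 - \<mu>) x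
            + (if n = 0 then 0 else rec_c \<mu> (n - 1) * r (n + 1) * jacobiP (n - 1) \<mu> (1 - \<mu>) x)"
    unfolding jacobiP_mu_recurrence[OF assms] by (simp add: algebra_simps)
  then show ?case using Suc.IH by (cases n) (simp_all add: algebra_simps)
qed simp

lemma sum_one_plus_x_jacobiP_mu:
  assumes "\<mu> > -1" "r 0 = 0" "\<And>k. n < k \<Longrightarrow> r k = 0"
  shows "(\<Sum>l<n. r (l + 1) * ((1 + x) * jacobiP l \<mu> (1 - \<mu>) x))
           = (\<Sum>i\<le>n. (rec_a i * r i + (rec_b \<mu> i + 1) * r (i + 1) + rec_c \<mu> i * r (i + 2))
                       * jacobiP i \<mu> (1 - \<mu>) x)"
proof -
  have "(\<Sum>i<n. rec_a (i + 1) * r (i + 1) * jacobiP (i + 1) \<mu> (1 - \<mu>) x)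
          = (\<Sum>i\<le>n. rec_a i * r i * jacobiP i \<mu> (1 - \<mu>) x)"
    using assms(2) by (simp add: sum.atMost_shift)
  moreover have "(\<Sum>i<n. (rec_b \<mu> i + 1) * r (i + 1) * jacobiP i \<mu> (1 - \<mu>) x)
          = (\<Sum>i\<le>n. (rec_b \<mu> i + 1) * r (i + 1) * jacobiP i \<mu> (1 - \<mu>) x)"
    using assms(3) by (intro sum.mono_neutral_left) auto
  moreover have "(\<Sum>i<n - 1. rec_c \<mu> i * r (i + 2) * jacobiP i \<mu> (1 - \<mu>) x)
          = (\<Sum>i\<le>n. rec_c \<mu> i * r (i + 2) * jacobiP i \<mu> (1 - \<mu>) x)"
    using assms(3) by (intro sum.mono_neutral_left) auto
  ultimately show ?thesis
    unfolding sum_one_plus_x_jacobiP_mu_telescoping[OF assms(1)]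
    by (simp add: sum.distrib algebra_simps)
qed

text \<open>The backward recurrence says exactly that, after expanding the left-hand side by the recurrence,
  the coefficient of \<open>P_i^(\<mu>,1-\<mu>)\<close> is \<open>t i\<close> for \<open>i \<ge> 1\<close>; the constant left over is read off at
  \<open>x = -1\<close>, where the left-hand side vanishes.\<close>
lemma backward_recurrence_one_plus_x_expansion:
  fixes c t :: "nat \<Rightarrow> real"
  assumes mu: "\<mu> > -1" and N: "N \<ge> 3"
    and c_N1: "c (N - 1) = t (N - 1) / rec_a (N - 1)"
    and c_N2: "c (N - 2) = t (N - 2) / rec_a (N - 2) - (rec_b \<mu> (N - 2) + 1) / rec_a (N - 2) * c (N - 1)"
    and c_i: "\<And>i. 1 \<le> i \<Longrightarrow> i \<le> N - 3 \<Longrightarrow>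
       c i = t i / rec_a i - (rec_b \<mu> i + 1) / rec_a i * c (i + 1) - rec_c \<mu> i / rec_a i * c (i + 2)"
  shows "(\<Sum>l\<le>N - 2. c (l + 1) * (1 + x) * jacobiP l \<mu> (1 - \<mu>) x)
           = (\<Sum>l\<le>N - 1. t l * jacobiP l \<mu> (1 - \<mu>) x) - (\<Sum>l\<le>N - 1. t l * jacobiP l \<mu> (1 - \<mu>) (-1))"
proof -
  let ?Q = "\<lambda>l y. jacobiP l \<mu> (1 - \<mu>) y"
  define r where "r k = (if 1 \<le> k \<and> k \<le> N - 1 then c k else 0)" for k
  define d where "d i = rec_a i * r i + (rec_b \<mu> i + 1) * r (i + 1) + rec_c \<mu> i * r (i + 2)" for i
  have a_nz: "rec_a i \<noteq> 0" for i by (simp add: rec_a_def)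
  have d: "d i = t i" if i: "1 \<le> i" "i \<le> N - 1" for i
  proof -
    consider "i = N - 1" | "i = N - 2" | "i \<le> N - 3" using i N by linarith
    then show ?thesis
    proof cases
      case 1
      then have "r i = c (N - 1)" "r (i + 1) = 0" "r (i + 2) = 0" using N by (auto simp: r_def)
      then show ?thesis using 1 c_N1 a_nz[of i] by (simp add: d_def)
    next
      case 2
      moreover have "Suc (N - 2) = N - 1" using N by simp
      ultimately have "r i = c (N - 2)" "r (i + 1) = c (N - 1)" "r (i + 2) = 0"
        using N by (auto simp: r_def)
      then show ?thesis using 2 c_N2 a_nz[of i] by (simp add: d_def field_simps)
    next
      case 3
      then have "d i = rec_a i * c i + (rec_b \<mu> i + 1) * c (i + 1) + rec_c \<mu> i * c (i + 2)"
        using i N by (simp add: d_def r_def)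
      also have "\<dots> = t i"
        unfolding c_i[OF i(1) 3] using a_nz[of i] by (simp add: field_simps)
      finally show ?thesis .
    qed
  qed
  have "(\<Sum>l\<le>N - 2. c (l + 1) * (1 + y) * ?Q l y) = (\<Sum>l\<le>N - 1. t l * ?Q l y) + (d 0 - t 0)" for y
  proof -
    have "{..N - 2} = {..<N - 1}" using N by auto
    then have "(\<Sum>l\<le>N - 2. c (l + 1) * (1 + y) * ?Q l y) = (\<Sum>l<N - 1. r (l + 1) * ((1 + y) * ?Q l y))"
      by (simp add: r_def mult.assoc)
    also have "\<dots> = (\<Sum>i\<le>N - 1. d i * ?Q i y)"
      unfolding d_def using mu by (intro sum_one_plus_x_jacobiP_mu) (auto simp: r_def)
    also have "\<dots> = (\<Sum>l\<le>N - 1. t l * ?Q l y) + (d 0 - t 0)"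
      using d mu by (simp add: sum.atMost_shift jacobiP_eq_poly jacobi_poly_0)
    finally show ?thesis .
  qed
  from this[of x] this[of "-1"] show ?thesis by simp
qed

section \<open>Jacobi--Gauss--Lobatto nodes and the Lagrange basis\<close>

lemma pderiv_nonzero_at_simple_root:
  fixes D :: "real poly"
  assumes "D \<noteq> 0" and card_roots: "card {y. poly D y = 0} = degree D" and root: "poly D r = 0"
  shows "poly (pderiv D) r \<noteq> 0"
proof
  assume "poly (pderiv D) r = 0"
  from root obtain E where E: "D = [:-r, 1:] * E" using poly_eq_0_iff_dvd by (metis dvdE)
  have "poly (pderiv D) r = poly E r" by (simp only: E pderiv_mult) (simp add: pderiv_pCons)
  with \<open>poly (pderiv D) r = 0\<close> obtain F where F: "E = [:-r, 1:] * F"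
    using poly_eq_0_iff_dvd by (metis dvdE)
  have "F \<noteq> 0" using \<open>D \<noteq> 0\<close> E F by auto
  have "D = [:-r, 1:] ^ 2 * F" by (simp only: E F power2_eq_square mult.assoc)
  then have deg: "degree D = degree F + 2"
    using \<open>F \<noteq> 0\<close> by (simp add: degree_mult_eq degree_power_eq del: mult_pCons_left)
  have "{y. poly D y = 0} - {r} \<subseteq> {y. poly F y = 0}"
    by (auto simp: E F)
  then have "card ({y. poly D y = 0} - {r}) \<le> card {y. poly F y = 0}"
    by (rule card_mono[OF poly_roots_finite[OF \<open>F \<noteq> 0\<close>]])
  also have "\<dots> \<le> degree F" by (rule card_poly_roots_bound[OF \<open>F \<noteq> 0\<close>])
  finally show False
    using card_roots root poly_roots_finite[OF \<open>D \<noteq> 0\<close>] deg by (simp add: card_Diff_singleton)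
qed

lemma JGL_quadrature:
  assumes "JGL_weights N \<alpha> \<beta> xs w" "degree p \<le> 2 * N - 1"
  shows "jacobi_integral \<alpha> \<beta> p = (\<Sum>i\<le>N. poly p (xs i) * w i)"
  unfolding jacobi_integral_def
  by (rule integral_unique) (use assms in \<open>simp add: JGL_weights_def jacobi_weight_def mult.assoc\<close>)

lemma jacobi_poly_ode_at_1:
  "\<alpha> > -1 \<Longrightarrow> 2 * (\<alpha> + 1) * poly (pderiv (jacobi_poly n \<alpha> \<beta>)) 1
                = real n * (real n + \<alpha> + \<beta> + 1) * poly (jacobi_poly n \<alpha> \<beta>) 1"
  using jacobi_poly_ode[of \<alpha> 1 n \<beta>] by (simp add: algebra_simps)

lemma jacobi_poly_ode_at_minus_1:
  "\<alpha> > -1 \<Longrightarrow> 2 * (\<beta> + 1) * poly (pderiv (jacobi_poly n \<alpha> \<beta>)) (-1)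
                = - real n * (real n + \<alpha> + \<beta> + 1) * poly (jacobi_poly n \<alpha> \<beta>) (-1)"
  using jacobi_poly_ode[of \<alpha> "-1" n \<beta>] by (simp add: algebra_simps)

lemma poly_pderiv_linear_mult_at_root: "poly (pderiv ([:- x, 1:] * r)) x = poly r (x :: real)"
  by (simp add: pderiv_mult pderiv_pCons del: mult_pCons_left)

locale JGL_quadrature_rule =
  fixes N :: nat and \<alpha> \<beta> :: real and xs w :: "nat \<Rightarrow> real"
  assumes N_pos: "N \<ge> 1"
    and \<alpha>: "\<alpha> > -1" and \<beta>: "\<beta> > -1"
    and nodes: "JGL_nodes N \<alpha> \<beta> xs"
    and weights: "JGL_weights N \<alpha> \<beta> xs w"
begin

abbreviation "P \<equiv> jacobi_poly N \<alpha> \<beta>"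
abbreviation "D \<equiv> pderiv (jacobi_poly N \<alpha> \<beta>)"

lemma nodes_strict_mono: "strict_mono_on {..N} xs"
  using nodes by (auto simp: JGL_nodes_def intro!: strict_mono_onI)

lemma nodes_inj: "i \<le> N \<Longrightarrow> j \<le> N \<Longrightarrow> xs i = xs j \<Longrightarrow> i = j"
  using strict_mono_on_imp_inj_on[OF nodes_strict_mono] by (auto dest: inj_onD)

lemma degree_D: "degree D = N - 1"
  using \<alpha> \<beta> by (simp add: degree_pderiv degree_jacobi_poly)

lemma D_nonzero: "D \<noteq> 0"
proof
  assume "D = 0"
  then have "degree P = 0" by (simp add: pderiv_eq_0_iff)
  with N_pos \<alpha> \<beta> show False by (simp add: degree_jacobi_poly)
qed

lemma nodes_image: "xs ` {..N} = {-1, 1} \<union> {y. poly D y = 0}"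
proof -
  have "1 - y\<^sup>2 = (1 - y) * (1 + y)" for y :: real by (simp add: power2_eq_square algebra_simps)
  then show ?thesis
    using nodes by (auto simp: JGL_nodes_def deriv_jacobiP atLeast0AtMost)
qed

text \<open>The \<open>N + 1\<close> nodes are \<open>\<plusminus>1\<close> and the at most \<open>N - 1\<close> roots of \<open>D\<close>, so the roots are exactly
  \<open>N - 1\<close> in number and none of them is \<open>\<plusminus>1\<close>.\<close>
lemma card_roots_D: "card {y. poly D y = 0} = N - 1"
  and D_minus_1: "poly D (-1) \<noteq> 0" and D_1: "poly D 1 \<noteq> 0"
proof -
  define R where "R = {y. poly D y = 0}"
  have fin: "finite R" unfolding R_def by (rule poly_roots_finite[OF D_nonzero])
  have "card R \<le> N - 1" unfolding R_def using card_poly_roots_bound[OF D_nonzero] degree_D by simp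
  moreover have "card (xs ` {..N}) = N + 1"
    using card_image[OF strict_mono_on_imp_inj_on[OF nodes_strict_mono]] by simp
  then have "2 + card R = N + 1 + card ({-1, 1} \<inter> R)"
    using card_Un_Int[of "{-1, 1::real}" R] fin nodes_image by (simp add: R_def)
  ultimately have "card R = N - 1" "card ({-1, 1} \<inter> R) = 0" using N_pos by linarith+
  then show "card {y. poly D y = 0} = N - 1" "poly D (-1) \<noteq> 0" "poly D 1 \<noteq> 0"
    using fin by (auto simp: R_def)
qed

lemma node_cases:
  assumes "j \<le> N"
  shows "xs j = -1 \<or> xs j = 1 \<or> poly D (xs j) = 0"
proof -
  have "xs j \<in> xs ` {..N}" using assms by simp
  then show ?thesis unfolding nodes_image by auto
qed

lemma poly_eq_0_if_vanishes_at_nodes: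
  assumes "degree p \<le> 2 * N - 1" "\<And>j. j \<le> N \<Longrightarrow> poly p (xs j) = 0"
    and "\<And>x. x \<in> {-1<..<1} \<Longrightarrow> poly p x \<ge> 0"
  shows "p = 0"
proof (rule jacobi_integral_eq_0_imp_poly_eq_0[OF \<alpha> \<beta> assms(3)])
  show "jacobi_integral \<alpha> \<beta> p = 0"
    using JGL_quadrature[OF weights assms(1)] assms(2) by simp
qed

text \<open>A root \<open>r\<close> of \<open>D\<close> outside \<open>[-1, 1]\<close> would give the polynomial
  \<open>(1 - x\<^sup>2) (x - r) (-r) \<Prod>\<^sub>s (x - s)\<^sup>2\<close> (\<open>s\<close> ranging over the other roots) of degree \<open>2N - 1\<close>,
  nonnegative on \<open>(-1, 1)\<close> and vanishing at all nodes.\<close>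
lemma roots_D_in_open_interval:
  assumes "poly D r = 0"
  shows "r \<in> {-1<..<1}"
proof (rule ccontr)
  assume "r \<notin> {-1<..<1}"
  moreover have "r \<noteq> -1" "r \<noteq> 1" using assms D_minus_1 D_1 by auto
  ultimately have r_out: "r < -1 \<or> r > 1" by auto
  define S where "S = {y. poly D y = 0} - {r}"
  define q where "q = (\<Prod>s\<in>S. [:-s, 1:])"
  define p where "p = smult (- r) ([:1, 0, -1:] * (q * q) * [:-r, 1:])"
  have finS: "finite S" unfolding S_def using poly_roots_finite[OF D_nonzero] by simp
  have "1 \<le> card {y. poly D y = 0}"
    using assms poly_roots_finite[OF D_nonzero] by (auto simp: Suc_le_eq card_gt_0_iff)
  then have "N \<ge> 2" using card_roots_D by linarith
  have "card S = N - 2"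
    using card_roots_D assms poly_roots_finite[OF D_nonzero] unfolding S_def
    by (subst card_Diff_singleton) auto
  moreover have "degree q \<le> card S"
    unfolding q_def using degree_prod_sum_le[OF finS, of "\<lambda>s. [:-s, 1:]"] by simp
  moreover have "degree p \<le> 2 + (degree q + degree q) + 1"
    unfolding p_def
    by (intro order.trans[OF degree_smult_le] order.trans[OF degree_mult_le] add_mono
        order.trans[OF degree_mult_le] degree_mult_le) auto
  ultimately have "degree p \<le> 2 * N - 1" using \<open>N \<ge> 2\<close> by linarith
  moreover have "poly p (xs j) = 0" if "j \<le> N" for j
  proof -
    have "xs j = -1 \<or> xs j = 1 \<or> xs j = r \<or> xs j \<in> S"
      using node_cases[OF that] by (auto simp: S_def)
    moreover have "poly q y = 0" if "y \<in> S" for y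
      unfolding q_def poly_prod using finS that by (auto simp: prod_zero_iff)
    ultimately show ?thesis by (auto simp: p_def simp del: mult_pCons_left)
  qed
  moreover have "poly p x \<ge> 0" if "x \<in> {-1<..<1}" for x
  proof -
    have eq: "poly p x = ((x - r) * (- r)) * ((1 - x\<^sup>2) * (poly q x)\<^sup>2)"
      by (simp add: p_def algebra_simps power2_eq_square del: mult_pCons_left)
    have "(x - r) * (- r) > 0"
      using r_out that by (elim disjE) (simp_all add: mult_pos_neg mult_neg_pos)
    moreover have "1 - x\<^sup>2 > 0" using that by (simp add: abs_square_less_1 abs_less_iff)
    ultimately show ?thesis unfolding eq by (metis mult_nonneg_nonneg less_imp_le zero_le_power2)
  qed
  ultimately have "p = 0" by (rule poly_eq_0_if_vanishes_at_nodes)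
  moreover have "q \<noteq> 0" unfolding q_def using finS by (simp add: prod_zero_iff)
  moreover have "r \<noteq> 0" using r_out by auto
  ultimately show False
    by (simp add: p_def mult_eq_0_iff del: mult_pCons_left mult_pCons_right)
qed

lemma nodes_in_interval: "j \<le> N \<Longrightarrow> xs j \<in> {-1..1}"
  using node_cases[of j] roots_D_in_open_interval[of "xs j"] by auto

lemma first_node: "xs 0 = -1"
proof -
  have "-1 \<in> xs ` {..N}" unfolding nodes_image by simp
  then obtain i where "i \<le> N" "xs i = -1" by auto
  moreover have "xs 0 \<le> xs i" using nodes_strict_mono \<open>i \<le> N\<close>
    by (cases "i = 0") (auto simp: strict_mono_on_def intro!: less_imp_le)
  ultimately show ?thesis using nodes_in_interval[of 0] by simp
qed

lemma last_node: "xs N = 1"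
proof -
  have "1 \<in> xs ` {..N}" unfolding nodes_image by simp
  then obtain i where "i \<le> N" "xs i = 1" by auto
  moreover have "xs i \<le> xs N" using nodes_strict_mono \<open>i \<le> N\<close>
    by (cases "i = N") (auto simp: strict_mono_on_def intro!: less_imp_le)
  ultimately show ?thesis using nodes_in_interval[of N] by simp
qed

lemma interior_node:
  assumes "0 < j" "j < N"
  shows "xs j \<in> {-1<..<1}" "poly D (xs j) = 0" "poly (pderiv D) (xs j) \<noteq> 0"
proof -
  have "xs 0 < xs j" "xs j < xs N" using nodes_strict_mono assms by (auto simp: strict_mono_on_def)
  then show "poly D (xs j) = 0" using node_cases[of j] assms first_node last_node by auto
  then show "xs j \<in> {-1<..<1}" "poly (pderiv D) (xs j) \<noteq> 0"
    using roots_D_in_open_interval pderiv_nonzero_at_simple_root[OF D_nonzero] card_roots_D degree_D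
    by auto
qed

lemma poly_eq_if_agree_on_nodes:
  assumes "degree p \<le> N - 1" "degree q \<le> N - 1" "\<And>i. i \<le> N - 1 \<Longrightarrow> poly p (xs i) = poly q (xs i)"
  shows "p = q"
proof (rule poly_eqI_degree[where A = "xs ` {..N - 1}"])
  have "inj_on xs {..N - 1}" using nodes_inj by (intro inj_onI) auto
  then have "card (xs ` {..N - 1}) = N" using N_pos by (simp add: card_image)
  then show "card (xs ` {..N - 1}) > degree p" "card (xs ` {..N - 1}) > degree q"
    using assms(1,2) N_pos by auto
qed (use assms(3) in auto)

lemma eigenvalue_pos: "real N * (real N + \<alpha> + \<beta> + 1) > 0"
  using N_pos \<alpha> \<beta> by simp

text \<open>The Lagrange basis polynomial at \<open>x\<^sub>0 = -1\<close> is \<open>D / D(-1)\<close>; the Jacobi equation at \<open>\<plusminus>1\<close>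
  expresses \<open>D(\<plusminus>1)\<close> through \<open>P(\<plusminus>1)\<close>.\<close>
lemma lagrange_basis_first_at_1:
  assumes "degree h \<le> N - 1" "\<And>i. i \<le> N - 1 \<Longrightarrow> poly h (xs i) = (if i = 0 then 1 else 0)"
  shows "poly h 1 = - ((\<beta> + 1) / (\<alpha> + 1) * (jacobiP N \<alpha> \<beta> 1 / jacobiP N \<alpha> \<beta> (-1)))"
proof -
  define lam where "lam = real N * (real N + \<alpha> + \<beta> + 1)"
  have "h = smult (1 / poly D (-1)) D"
  proof (rule poly_eq_if_agree_on_nodes[OF assms(1)])
    show "degree (smult (1 / poly D (-1)) D) \<le> N - 1" using degree_D by simp
    show "poly h (xs i) = poly (smult (1 / poly D (-1)) D) (xs i)" if "i \<le> N - 1" for i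
      using assms(2)[OF that] first_node D_minus_1 interior_node(2)[of i] that N_pos by auto
  qed
  then have "poly h 1 = poly D 1 / poly D (-1)" by simp
  moreover have "poly D 1 = lam * poly P 1 / (2 * (\<alpha> + 1))"
    using jacobi_poly_ode_at_1[OF \<alpha>, where n = N and \<beta> = \<beta>] \<alpha> by (simp add: lam_def field_simps)
  moreover have D_minus_1_eq: "poly D (-1) = - lam * poly P (-1) / (2 * (\<beta> + 1))"
    using jacobi_poly_ode_at_minus_1[OF \<alpha>, where n = N and \<beta> = \<beta>] \<beta> by (simp add: lam_def field_simps)
  moreover have "lam > 0" using eigenvalue_pos by (simp add: lam_def)
  moreover have "poly P (-1) \<noteq> 0" using D_minus_1 D_minus_1_eq by auto
  ultimately show ?thesis
    using \<alpha> \<beta> by (simp add: jacobiP_eq_poly divide_simps) (simp add: algebra_simps)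
qed

text \<open>For \<open>0 < j\<close> the Lagrange basis polynomial is \<open>r / r(x\<^sub>j)\<close> where
  \<open>(1 + x) D(x) = (x - x\<^sub>j) r(x)\<close>; then \<open>r(x\<^sub>j) = (1 + x\<^sub>j) D'(x\<^sub>j)\<close>, and the Jacobi equation at the
  root \<open>x\<^sub>j\<close> of \<open>D\<close> turns \<open>(1 - x\<^sub>j\<^sup>2) D'(x\<^sub>j)\<close> into \<open>-\<lambda> P(x\<^sub>j)\<close>.\<close>
lemma lagrange_basis_interior_at_1:
  assumes j: "0 < j" "j \<le> N - 1"
    and h: "degree h \<le> N - 1" "\<And>i. i \<le> N - 1 \<Longrightarrow> poly h (xs i) = (if i = j then 1 else 0)"
  shows "poly h 1 = - (1 / (\<alpha> + 1) * (jacobiP N \<alpha> \<beta> 1 / jacobiP N \<alpha> \<beta> (xs j)))"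
proof -
  define lam where "lam = real N * (real N + \<alpha> + \<beta> + 1)"
  define x where "x = xs j"
  have x: "-1 < x" "x < 1" "poly D x = 0" "poly (pderiv D) x \<noteq> 0"
    using interior_node[of j] j unfolding x_def by auto
  define q where "q = [:1, 1:] * D"
  obtain r where r: "q = [:-x, 1:] * r"
    using x(3) by (metis dvdE mult_eq_0_iff poly_eq_0_iff_dvd poly_mult q_def)
  have "degree q = N"
    using D_nonzero degree_D N_pos by (simp add: q_def degree_mult_eq del: mult_pCons_left)
  moreover have "q \<noteq> 0" unfolding q_def using D_nonzero by (metis mult_eq_0_iff pCons_eq_0_iff one_neq_zero)
  then have "r \<noteq> 0" using r by (metis mult_zero_right)
  then have "degree q = degree r + 1" unfolding r by (simp add: degree_mult_eq del: mult_pCons_left)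
  ultimately have deg_r: "degree r = N - 1" by simp
  have "poly r x = poly (pderiv q) x" by (metis r poly_pderiv_linear_mult_at_root)
  also have "\<dots> = (1 + x) * poly (pderiv D) x"
    using x(3) by (simp add: q_def pderiv_mult pderiv_pCons del: mult_pCons_left)
  finally have rx: "poly r x = (1 + x) * poly (pderiv D) x" .
  then have "poly r x \<noteq> 0" using x by simp
  have "h = smult (1 / poly r x) r"
  proof (rule poly_eq_if_agree_on_nodes[OF h(1)])
    show "degree (smult (1 / poly r x) r) \<le> N - 1" using deg_r by simp
    fix i assume i: "i \<le> N - 1"
    show "poly h (xs i) = poly (smult (1 / poly r x) r) (xs i)"
    proof (cases "i = j")
      case False
      have "poly q (xs i) = 0"
        using first_node interior_node(2)[of i] i N_pos by (cases "i = 0") (auto simp: q_def)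
      moreover have "i \<le> N" "j \<le> N" using i j by auto
      then have "xs i \<noteq> x" using nodes_inj[of i j] False unfolding x_def by auto
      ultimately show ?thesis using h(2)[OF i] False by (simp add: r)
    qed (use h(2)[OF i] \<open>poly r x \<noteq> 0\<close> x_def in simp)
  qed
  then have "poly h 1 = poly r 1 / poly r x" by simp
  also have "\<dots> = ((1 - x) * poly r 1) / ((1 - x) * poly r x)" using x by simp
  also have "(1 - x) * poly r 1 = 2 * poly D 1"
    using arg_cong[OF r, of "\<lambda>p. poly p 1"] by (simp add: q_def algebra_simps)
  also have rx': "(1 - x) * poly r x = - lam * poly P x"
    using jacobi_poly_ode[OF \<alpha>, of x N \<beta>] x(3) unfolding rx lam_def
    by (simp add: power2_eq_square algebra_simps)
  also have "2 * poly D 1 = lam * poly P 1 / (\<alpha> + 1)"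
    using jacobi_poly_ode_at_1[OF \<alpha>, where n = N and \<beta> = \<beta>] \<alpha> by (simp add: lam_def field_simps)
  finally have "poly h 1 = lam * poly P 1 / (\<alpha> + 1) / (- lam * poly P x)" .
  moreover have "lam > 0" using eigenvalue_pos by (simp add: lam_def)
  moreover have "poly P x \<noteq> 0" using rx' \<open>poly r x \<noteq> 0\<close> x(2) by auto
  ultimately show ?thesis using \<alpha> by (simp add: x_def jacobiP_eq_poly divide_simps)
qed

lemma sum_atMost_N: "(\<Sum>i\<le>N. f i) = (\<Sum>i\<le>N - 1. f i) + f N"
  using N_pos sum.atMost_Suc[of f "N - 1"] by simp

lemma lagrange_basis_jacobi_expansion:
  assumes j: "j \<le> N - 1"
    and h: "degree h \<le> N - 1" "\<And>i. i \<le> N - 1 \<Longrightarrow> poly h (xs i) = (if i = j then 1 else 0)"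
  shows "poly h x = (\<Sum>n\<le>N - 1. rho \<alpha> \<beta> N xs w n j * jacobiP n \<alpha> \<beta> x)"
proof -
  have "jacobi_integral \<alpha> \<beta> (jacobi_poly n \<alpha> \<beta> * h) / jacobi_gamma n \<alpha> \<beta> = rho \<alpha> \<beta> N xs w n j"
    if n: "n \<le> N - 1" for n
  proof -
    have "degree (jacobi_poly n \<alpha> \<beta> * h) \<le> 2 * N - 1"
      using degree_mult_le[of "jacobi_poly n \<alpha> \<beta>" h] degree_jacobi_poly[OF \<alpha> \<beta>, of n] h(1) n by linarith
    then have "jacobi_integral \<alpha> \<beta> (jacobi_poly n \<alpha> \<beta> * h)
                 = (\<Sum>i\<le>N. poly (jacobi_poly n \<alpha> \<beta> * h) (xs i) * w i)"
      by (rule JGL_quadrature[OF weights])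
    also have "\<dots> = (\<Sum>i\<le>N - 1. poly (jacobi_poly n \<alpha> \<beta> * h) (xs i) * w i)
                     + jacobiP n \<alpha> \<beta> 1 * poly h 1 * w N"
      by (simp add: sum_atMost_N last_node jacobiP_eq_poly)
    also have "(\<Sum>i\<le>N - 1. poly (jacobi_poly n \<alpha> \<beta> * h) (xs i) * w i)
                 = (\<Sum>i\<le>N - 1. if i = j then jacobiP n \<alpha> \<beta> (xs j) * w j else 0)"
      by (rule sum.cong) (auto simp: h(2) jacobiP_eq_poly)
    also have "\<dots> = jacobiP n \<alpha> \<beta> (xs j) * w j" using j by simp
    finally show ?thesis
      using j lagrange_basis_first_at_1[OF h(1)] lagrange_basis_interior_at_1[OF _ j h] h(2) first_node
      by (cases "j = 0") (simp_all add: rho_def field_simps)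
  qed
  then show ?thesis
    using jacobi_orthogonal_expansion[OF \<alpha> \<beta> h(1)]
    by (subst (1) jacobi_orthogonal_expansion[OF \<alpha> \<beta> h(1)]) (simp add: poly_sum jacobiP_eq_poly)
qed

end

theorem lemma5p2:
  fixes N :: nat and \<alpha> \<beta> \<mu> :: real
    and xs w :: "nat \<Rightarrow> real"
    and h :: "nat \<Rightarrow> real poly"
    and rh :: "nat \<Rightarrow> nat \<Rightarrow> real"
  assumes N: "N \<ge> 3"
    and ab: "\<alpha> > -1" "\<beta> > -1"
    and mu: "1 < \<mu>" "\<mu> < 2"
    and nodes: "JGL_nodes N \<alpha> \<beta> xs"
    and weights: "JGL_weights N \<alpha> \<beta> xs w"
    and h_deg: "\<And>j. j \<le> N - 1 \<Longrightarrow> degree (h j) \<le> N - 1"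
    and h_lag: "\<And>i j. i \<le> N - 1 \<Longrightarrow> j \<le> N - 1 \<Longrightarrow> poly (h j) (xs i) = (if i = j then 1 else 0)"
    and rh0: "\<And>j. j \<le> N - 1 \<Longrightarrow> rh 0 j = (if j = 0 then 1 else 0)"
    and rhN1: "\<And>j. j \<le> N - 1 \<Longrightarrow>
       rh (N - 1) j = rho_tilde \<alpha> \<beta> \<mu> N xs w (N - 1) j / rec_a (N - 1)"
    and rhN2: "\<And>j. j \<le> N - 1 \<Longrightarrow>
       rh (N - 2) j = rho_tilde \<alpha> \<beta> \<mu> N xs w (N - 2) j / rec_a (N - 2)
                      - (rec_b \<mu> (N - 2) + 1) / rec_a (N - 2) * rh (N - 1) j"
    and rhi: "\<And>i j. 1 \<le> i \<Longrightarrow> i \<le> N - 3 \<Longrightarrow> j \<le> N - 1 \<Longrightarrow>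
       rh i j = rho_tilde \<alpha> \<beta> \<mu> N xs w i j / rec_a i
                - (rec_b \<mu> i + 1) / rec_a i * rh (i + 1) j
                - rec_c \<mu> i / rec_a i * rh (i + 2) j"
  shows "\<forall>j \<le> N - 1. \<forall>x::real.
           poly (h j) x = (\<Sum>n\<le>N - 1. rho \<alpha> \<beta> N xs w n j * jacobiP n \<alpha> \<beta> x) \<and>
           poly (h j) x = (\<Sum>l\<le>N - 1. rho_tilde \<alpha> \<beta> \<mu> N xs w l j * jacobiP l \<mu> (1 - \<mu>) x) \<and>
           poly (h j) x = rh 0 j + (\<Sum>l\<le>N - 2. rh (l + 1) j * (1 + x) * jacobiP l \<mu> (1 - \<mu>) x)"
proof (intro allI impI)
  fix j x assume j: "j \<le> N - 1"
  interpret JGL_quadrature_rule N \<alpha> \<beta> xs w using N ab nodes weights by unfold_locales auto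
  have rho_expansion: "poly (h j) y = (\<Sum>n\<le>N - 1. rho \<alpha> \<beta> N xs w n j * jacobiP n \<alpha> \<beta> y)" for y
    by (rule lagrange_basis_jacobi_expansion[OF j h_deg[OF j] h_lag[OF _ j]])
  have rho_tilde_expansion:
    "poly (h j) y = (\<Sum>l\<le>N - 1. rho_tilde \<alpha> \<beta> \<mu> N xs w l j * jacobiP l \<mu> (1 - \<mu>) y)" for y
    unfolding rho_expansion rho_tilde_def using ab mu by (intro jacobiP_connection_sum) auto
  have "(\<Sum>l\<le>N - 2. rh (l + 1) j * (1 + x) * jacobiP l \<mu> (1 - \<mu>) x) = poly (h j) x - poly (h j) (-1)"
    unfolding rho_tilde_expansion using mu N rhN1[OF j] rhN2[OF j] rhi[OF _ _ j]
    by (intro backward_recurrence_one_plus_x_expansion) auto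
  moreover have "poly (h j) (-1) = rh 0 j" using h_lag[of 0 j] rh0[OF j] j first_node by simp
  ultimately show "poly (h j) x = (\<Sum>n\<le>N - 1. rho \<alpha> \<beta> N xs w n j * jacobiP n \<alpha> \<beta> x) \<and>
      poly (h j) x = (\<Sum>l\<le>N - 1. rho_tilde \<alpha> \<beta> \<mu> N xs w l j * jacobiP l \<mu> (1 - \<mu>) x) \<and>
      poly (h j) x = rh 0 j + (\<Sum>l\<le>N - 2. rh (l + 1) j * (1 + x) * jacobiP l \<mu> (1 - \<mu>) x)"
    using rho_expansion rho_tilde_expansion by simp
qed

end
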